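(* Let $f\ge0$ with $f\in L_1(\mathbb{R})\cap L_2(\mathbb{R})$, let $n\ge2$ be an integer, and let $N$ be a Poisson process on $\mathbb{R}$ with intensity $nf$ with respect to Lebesgue measure. Let $1<\gamma_{\min}<\gamma$. Let $(u_n)_n$ be a sequence of positive numbers and $$\Lambda_u=\{\lambda\in\Gamma_n:\ \mathbb{P}(\eta_{\lambda,\gamma}\le|\beta_\lambda|+\eta_{\lambda,\gamma_{\min}})\le u_n\}.$$ Then $$\mathbb{E}\big(\|\tilde f^H_{n,\gamma}-f\|_2^2\big)\ge\Big(\sum_{\lambda\in\Lambda_u}\beta_\lambda^2\Big)\big(1-(3n^{-\gamma_{\min}}+u_n)\big).$$
   Context: Haar basis: $\phi=1_{[0,1]}$, $\psi=1_{[0,1/2]}-1_{(1/2,1]}$, $\phi_k(x)=\phi(x-k)$, $\psi_{j,k}(x)=2^{j/2}\psi(2^jx-k)$ ($j\ge0$, $k\in\mathbb{Z}$). $\Lambda=\{(j,k):j\ge-1,k\in\mathbb{Z}\}$; $\varphi_\lambda=\phi_k$ if $\lambda=(-1,k)$ and $\varphi_\lambda=\psi_{j,k}$ if $\lambda=(j,k)$, $j\ge0$; $\beta_\lambda=\int\varphi_\lambda f$. Define $\hat\beta_\lambda=\frac1n\sum_{T\in N}\varphi_\lambda(T)$, $\hat V_{\lambda,n}=\frac1{n^2}\sum_{T\in N}\varphi_\lambda^2(T)$, and for any parameter $g>0$, $$\tilde V^{(g)}_{\lambda,n}=\hat V_{\lambda,n}+\sqrt{2g\ln n\,\hat V_{\lambda,n}\frac{\|\varphi_\lambda\|_\infty^2}{n^2}}+3g\ln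 n\frac{\|\varphi_\lambda\|_\infty^2}{n^2},\qquad \eta_{\lambda,g}=\sqrt{2g\tilde V^{(g)}_{\lambda,n}\ln n}+\frac{g\ln n}{3n}\|\varphi_\lambda\|_\infty$$ (so $\eta_{\lambda,\gamma}$ and $\eta_{\lambda,\gamma_{\min}}$ are these thresholds with $g=\gamma$ and $g=\gamma_{\min}$ respectively). Let $j_0$ be the integer with $2^{j_0}\le n<2^{j_0+1}$ and $\Gamma_n=\{(j,k)\in\Lambda: j\le j_0\}$. The estimator is $\tilde f^H_{n,\gamma}=\sum_{\lambda\in\Gamma_n}\hat\beta_\lambda 1_{\{|\hat\beta_\lambda|\ge\eta_{\lambda,\gamma}\}}\varphi_\lambda$. *)

theory Defs
  imports "HOL-Probability.Probability" "HOL-Library.Multiset"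
begin

definition haar_phi :: "real \<Rightarrow> real" where
  "haar_phi x = indicator {0..1} x"

definition haar_psi :: "real \<Rightarrow> real" where
  "haar_psi x = indicator {0..1/2} x - indicator {1/2<..1} x"

definition Lambda_idx :: "(int \<times> int) set" where
  "Lambda_idx = {(j,k). j \<ge> -1}"

definition varphi :: "int \<times> int \<Rightarrow> real \<Rightarrow> real" where
  "varphi l x = (let (j,k) = l in
     if j = -1 then haar_phi (x - real_of_int k)
     else 2 powr (real_of_int j / 2) * haar_psi (2 powr real_of_int j * x - real_of_int k))"

definition sup_norm :: "(real \<Rightarrow> real) \<Rightarrow> real" where
  "sup_norm g = (SUP x. \<bar>g x\<bar>)"

definition beta :: "(real \<Rightarrow> real) \<Rightarrow> int \<times> int \<Rightarrow> real" where
  "beta f l = (LINT x|lborel. varphi l x * f x)"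

section \<open>Empirical quantities (a point configuration is a finite multiset of reals)\<close>

definition beta_hat :: "nat \<Rightarrow> real multiset \<Rightarrow> int \<times> int \<Rightarrow> real" where
  "beta_hat n X l = (1 / real n) * sum_mset (image_mset (varphi l) X)"

definition V_hat :: "nat \<Rightarrow> real multiset \<Rightarrow> int \<times> int \<Rightarrow> real" where
  "V_hat n X l = (1 / (real n)\<^sup>2) * sum_mset (image_mset (\<lambda>t. (varphi l t)\<^sup>2) X)"

definition V_tilde :: "real \<Rightarrow> nat \<Rightarrow> real multiset \<Rightarrow> int \<times> int \<Rightarrow> real" where
  "V_tilde g n X l = V_hat n X l
     + sqrt (2 * g * ln (real n) * V_hat n X l * (sup_norm (varphi l))\<^sup>2 / (real n)\<^sup>2)
     + 3 * g * ln (real n) * (sup_norm (varphi l))\<^sup>2 / (real n)\<^sup>2"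

definition eta :: "real \<Rightarrow> nat \<Rightarrow> real multiset \<Rightarrow> int \<times> int \<Rightarrow> real" where
  "eta g n X l = sqrt (2 * g * V_tilde g n X l * ln (real n))
     + g * ln (real n) / (3 * real n) * sup_norm (varphi l)"

definition j0 :: "nat \<Rightarrow> int" where
  "j0 n = (THE j::int. 2 powr real_of_int j \<le> real n \<and> real n < 2 powr real_of_int (j + 1))"

definition Gamma_n :: "nat \<Rightarrow> (int \<times> int) set" where
  "Gamma_n n = {(j,k) \<in> Lambda_idx. j \<le> j0 n}"

text \<open>The hard-thresholding estimator (pointwise; for fixed x only finitely many terms are nonzero).\<close>
definition f_tilde_H :: "nat \<Rightarrow> real \<Rightarrow> real multiset \<Rightarrow> real \<Rightarrow> real" where
  "f_tilde_H n \<gamma> X x =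
     (\<Sum>\<^sub>\<infinity>l\<in>Gamma_n n. beta_hat n X l
        * (if \<bar>beta_hat n X l\<bar> \<ge> eta \<gamma> n X l then 1 else 0) * varphi l x)"

definition count_in :: "real set \<Rightarrow> real multiset \<Rightarrow> nat" where
  "count_in A X = size (filter_mset (\<lambda>t. t \<in> A) X)"

definition poisson_process :: "'a measure \<Rightarrow> ('a \<Rightarrow> real multiset) \<Rightarrow> real measure \<Rightarrow> bool" where
  "poisson_process M N \<nu> \<longleftrightarrow>
     prob_space M \<and> sets \<nu> = sets borel \<and> emeasure \<nu> UNIV < \<infinity> \<and>
     (\<forall>A \<in> sets borel. (\<lambda>\<omega>. count_in A (N \<omega>)) \<in> measurable M (count_space UNIV)) \<and>
     (\<forall>A \<in> sets borel. \<forall>k::nat.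
        measure M {\<omega> \<in> space M. count_in A (N \<omega>) = k}
          = exp (- measure \<nu> A) * (measure \<nu> A) ^ k / fact k) \<and>
     (\<forall>(I::nat set) A. A ` I \<subseteq> sets borel \<longrightarrow> disjoint_family_on A I \<longrightarrow>
        prob_space.indep_vars M (\<lambda>_. count_space UNIV) (\<lambda>i \<omega>. count_in (A i) (N \<omega>)) I)"

end

theory Submission
  imports Defs
begin

text \<open>Call a coefficient discarded when \<open>|\<beta>\<^sup>^\<^sub>\<lambda>| < \<eta>\<^sub>\<lambda>\<^sub>,\<^sub>\<gamma>\<close>.  The Haar functions are
  orthonormal, so by Bessel's inequality the loss \<open>\<parallel>f\<^sup>~ - f\<parallel>\<^sup>2\<close> is at least the sum of
  \<open>\<beta>\<^sub>\<lambda>\<^sup>2\<close> over the discarded \<open>\<lambda>\<close>, and its expectation is at least the sum of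
  \<open>\<beta>\<^sub>\<lambda>\<^sup>2 P(\<lambda> discarded)\<close>.  A coefficient can only be kept if \<open>\<beta>\<^sup>^\<^sub>\<lambda>\<close> deviates from \<open>\<beta>\<^sub>\<lambda>\<close> by
  at least the smaller threshold \<open>\<eta>\<^sub>\<lambda>\<^sub>,\<^sub>\<gamma>\<^sub>m\<^sub>i\<^sub>n\<close>, or if \<open>\<eta>\<^sub>\<lambda>\<^sub>,\<^sub>\<gamma> \<le> |\<beta>\<^sub>\<lambda>| + \<eta>\<^sub>\<lambda>\<^sub>,\<^sub>\<gamma>\<^sub>m\<^sub>i\<^sub>n\<close>, which
  has probability at most \<open>u\<^sub>n\<close> on \<open>\<Lambda>\<^sub>u\<close>.  Up to the factor \<open>\<parallel>\<phi>\<^sub>\<lambda>\<parallel>\<^sub>\<infinity>/n\<close>, \<open>\<beta>\<^sup>^\<^sub>\<lambda>\<close> is the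
  difference of two independent Poisson counts, so the deviation is controlled by Bernstein's
  inequality; the data-driven variance term of \<open>\<eta>\<close> dominates the true variance unless the
  total count deviates downwards, which costs one more Bernstein bound, \<open>3 n\<^sup>-\<^sup>\<gamma>\<^sup>m\<^sup>i\<^sup>n\<close> in all.\<close>

lemma two_mult_three_pow_le_fact: "2 * 3 ^ k \<le> (fact (k + 2) :: real)"
proof (induction k)
  case 0 then show ?case by simp
next
  case (Suc k)
  have "fact (Suc k + 2) = real (k + 3) * (fact (k + 2) :: real)"
    by (simp add: fact_Suc algebra_simps)
  moreover have "real (k + 3) * fact (k + 2) \<ge> 3 * (2 * 3 ^ k)"
    using Suc by (intro mult_mono) auto
  ultimately show ?case by (simp only: power_Suc)
qed

text \<open>Compare \<open>\<theta>\<^sup>k/k!\<close> termwise with the geometric series \<open>\<theta>\<^sup>2/2 \<cdot> (\<bar>\<theta>\<bar>/3)\<^sup>k\<^sup>-\<^sup>2\<close>.\<close>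
lemma exp_remainder_le:
  fixes \<theta> :: real assumes "\<bar>\<theta>\<bar> < 3"
  shows "exp \<theta> - 1 - \<theta> \<le> \<theta>\<^sup>2 / (2 * (1 - \<bar>\<theta>\<bar> / 3))"
proof -
  have "(\<lambda>k. \<theta> ^ k / fact k) sums exp \<theta>"
    using exp_converges[of \<theta>] by (simp add: divide_inverse mult.commute)
  then have "(\<lambda>k. \<theta> ^ Suc k / fact (Suc k)) sums (exp \<theta> - 1)"
    using sums_Suc_iff[of "\<lambda>k. \<theta> ^ k / fact k"] by simp
  then have "(\<lambda>k. \<theta> ^ Suc (Suc k) / fact (Suc (Suc k))) sums (exp \<theta> - 1 - \<theta>)"
    using sums_Suc_iff[of "\<lambda>k. \<theta> ^ Suc k / fact (Suc k)"] by simp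
  then have tail: "(\<lambda>k. \<theta> ^ (k + 2) / fact (k + 2)) sums (exp \<theta> - 1 - \<theta>)"
    by (simp add: numeral_2_eq_2)
  have "\<bar>\<bar>\<theta>\<bar> / 3\<bar> < 1" using assms by auto
  then have geom: "(\<lambda>k. \<theta>\<^sup>2 / 2 * (\<bar>\<theta>\<bar> / 3) ^ k) sums (\<theta>\<^sup>2 / 2 * (1 / (1 - \<bar>\<theta>\<bar> / 3)))"
    using sums_mult[OF geometric_sums[of "\<bar>\<theta>\<bar> / 3"], of "\<theta>\<^sup>2 / 2"] by simp
  have "\<theta> ^ (k + 2) / fact (k + 2) \<le> \<theta>\<^sup>2 / 2 * (\<bar>\<theta>\<bar> / 3) ^ k" for k
  proof -
    have "\<theta> ^ (k + 2) / fact (k + 2) \<le> \<bar>\<theta>\<bar> ^ (k + 2) / fact (k + 2)"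
      using abs_ge_self[of "\<theta> ^ (k + 2)"] unfolding power_abs by (intro divide_right_mono) auto
    also have "\<dots> \<le> \<bar>\<theta>\<bar> ^ (k + 2) / (2 * 3 ^ k)"
      by (intro divide_left_mono two_mult_three_pow_le_fact) auto
    also have "\<dots> = \<theta>\<^sup>2 / 2 * (\<bar>\<theta>\<bar> / 3) ^ k"
      by (simp add: power_add power_divide power2_eq_square)
    finally show ?thesis .
  qed
  then have "exp \<theta> - 1 - \<theta> \<le> \<theta>\<^sup>2 / 2 * (1 / (1 - \<bar>\<theta>\<bar> / 3))"
    by (intro sums_le[OF _ tail geom]) auto
  then show ?thesis by simp
qed

lemma nn_integral_nat_valued:
  assumes Z: "Z \<in> M \<rightarrow>\<^sub>M count_space UNIV"
  shows "(\<integral>\<^sup>+\<omega>. g (Z \<omega>) \<partial>M) = (\<Sum>k. g k * emeasure M {\<omega>\<in>space M. Z \<omega> = (k::nat)})"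
proof -
  have "(\<integral>\<^sup>+\<omega>. g (Z \<omega>) \<partial>M) = (\<integral>\<^sup>+\<omega>. (\<Sum>k. g k * indicator {\<omega>\<in>space M. Z \<omega> = k} \<omega>) \<partial>M)"
  proof (rule nn_integral_cong)
    fix \<omega> assume "\<omega> \<in> space M"
    then have "(\<lambda>k. g k * indicator {\<omega>\<in>space M. Z \<omega> = k} \<omega>) = (\<lambda>k. if k = Z \<omega> then g k else 0)"
      by (auto simp: indicator_def)
    then show "g (Z \<omega>) = (\<Sum>k. g k * indicator {\<omega>\<in>space M. Z \<omega> = k} \<omega>)"
      using sums_unique[OF sums_single[of "Z \<omega>" g]] by simp
  qed
  also have "\<dots> = (\<Sum>k. \<integral>\<^sup>+\<omega>. g k * indicator {\<omega>\<in>space M. Z \<omega> = k} \<omega> \<partial>M)"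
    by (rule nn_integral_suminf) (use Z in measurable)
  also have "\<dots> = (\<Sum>k. g k * emeasure M {\<omega>\<in>space M. Z \<omega> = k})"
    by (intro suminf_cong nn_integral_cmult_indicator) (use Z in measurable)
  finally show ?thesis .
qed

lemma (in prob_space) poisson_nn_integral_exp:
  assumes Z: "Z \<in> M \<rightarrow>\<^sub>M count_space UNIV"
    and distr: "\<And>k. prob {\<omega>\<in>space M. Z \<omega> = k} = exp (- \<mu>) * \<mu> ^ k / fact k"
    and "\<mu> \<ge> 0"
  shows "(\<integral>\<^sup>+\<omega>. ennreal (exp (s * real (Z \<omega>))) \<partial>M) = ennreal (exp (\<mu> * (exp s - 1)))"
proof -
  have series: "(\<lambda>k. exp (s * real k) * (exp (- \<mu>) * \<mu> ^ k / fact k)) sums (exp (- \<mu>) * exp (\<mu> * exp s))"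
  proof -
    have "(\<lambda>k. (\<mu> * exp s) ^ k / fact k) sums exp (\<mu> * exp s)"
      using exp_converges[of "\<mu> * exp s"] by (simp add: divide_inverse mult.commute)
    from sums_mult[OF this, of "exp (- \<mu>)"] show ?thesis
      by (simp add: power_mult_distrib exp_of_nat_mult[symmetric] mult.commute mult.left_commute)
  qed
  have "(\<integral>\<^sup>+\<omega>. ennreal (exp (s * real (Z \<omega>))) \<partial>M)
      = (\<Sum>k. ennreal (exp (s * real k)) * emeasure M {\<omega>\<in>space M. Z \<omega> = k})"
    by (rule nn_integral_nat_valued[OF Z])
  also have "\<dots> = (\<Sum>k. ennreal (exp (s * real k) * (exp (- \<mu>) * \<mu> ^ k / fact k)))"
    using \<open>\<mu> \<ge> 0\<close> by (intro suminf_cong) (simp add: emeasure_eq_measure distr ennreal_mult[symmetric])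
  also have "\<dots> = ennreal (exp (- \<mu>) * exp (\<mu> * exp s))"
    using series \<open>\<mu> \<ge> 0\<close> by (subst suminf_ennreal2) (auto simp: sums_iff)
  also have "exp (- \<mu>) * exp (\<mu> * exp s) = exp (\<mu> * (exp s - 1))"
    by (simp add: exp_add[symmetric] algebra_simps)
  finally show ?thesis .
qed

text \<open>Minimising \<open>-\<theta>(w + x/3) + v\<theta>\<^sup>2/(2(1-\<theta>/3))\<close> over \<open>\<theta>\<close>: Bernstein's choice of exponent.\<close>
lemma bernstein_exponent:
  fixes v x :: real
  assumes v: "v > 0" and x: "x \<ge> 0"
  defines "w \<equiv> sqrt (2 * v * x)"
  defines "\<theta> \<equiv> 3 * w / (3 * v + w)"
  shows "0 \<le> \<theta>" "\<theta> < 3" "- \<theta> * (w + x / 3) + v * (\<theta>\<^sup>2 / (2 * (1 - \<theta> / 3))) = - x"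
proof -
  have w0: "w \<ge> 0" and w2: "w\<^sup>2 = 2 * v * x" using v x by (simp_all add: w_def)
  have d: "3 * v + w > 0" using v w0 by linarith
  show "0 \<le> \<theta>" "\<theta> < 3" unfolding \<theta>_def using w0 d v by (simp_all add: field_simps)
  have "1 - \<theta> / 3 = 3 * v / (3 * v + w)"
    unfolding \<theta>_def using d by (simp add: field_simps)
  then have "v * (\<theta>\<^sup>2 / (2 * (1 - \<theta> / 3))) = v * (9 * w\<^sup>2 / (3 * v + w)\<^sup>2) / (2 * (3 * v / (3 * v + w)))"
    unfolding \<theta>_def by (simp add: power_divide power_mult_distrib)
  also have "\<dots> = 3 * w\<^sup>2 / (2 * (3 * v + w))"
    using d v by (simp add: divide_simps power2_eq_square)
  also have "\<dots> = 3 * v * x / (3 * v + w)"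
    using w2 d by (simp add: divide_simps)
  finally have a: "v * (\<theta>\<^sup>2 / (2 * (1 - \<theta> / 3))) = 3 * v * x / (3 * v + w)" .
  have "\<theta> * (w + x / 3) = (3 * w\<^sup>2 + w * x) / (3 * v + w)"
    unfolding \<theta>_def using d by (simp add: field_simps power2_eq_square)
  then have b: "\<theta> * (w + x / 3) = (6 * v * x + w * x) / (3 * v + w)"
    using w2 by simp
  have "3 * v * x - (6 * v * x + w * x) = - x * (3 * v + w)"
    by (simp add: algebra_simps)
  then show "- \<theta> * (w + x / 3) + v * (\<theta>\<^sup>2 / (2 * (1 - \<theta> / 3))) = - x"
    unfolding mult_minus_left a b using d by (simp add: diff_divide_distrib[symmetric])
qed

locale poisson_pair = prob_space +
  fixes Z :: "nat \<Rightarrow> 'a \<Rightarrow> nat" and \<mu> :: "nat \<Rightarrow> real"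
  assumes measurable_Z: "\<And>i. Z i \<in> M \<rightarrow>\<^sub>M count_space UNIV"
    and indep_Z: "indep_vars (\<lambda>_. count_space UNIV) Z {0, 1}"
    and distr_Z: "\<And>i k. prob {\<omega>\<in>space M. Z i \<omega> = k} = exp (- \<mu> i) * \<mu> i ^ k / fact k"
    and mean_nonneg: "\<And>i. \<mu> i \<ge> 0"
begin

lemma borel_measurable_Z: "(\<lambda>\<omega>. real (Z i \<omega>)) \<in> borel_measurable M"
  using measurable_Z[of i] by (rule measurable_compose) simp

lemma chernoff:
  assumes "\<theta> \<ge> 0"
  shows "prob {\<omega>\<in>space M. t \<le> c0 * real (Z 0 \<omega>) + c1 * real (Z 1 \<omega>)}
          \<le> exp (- \<theta> * t + \<mu> 0 * (exp (\<theta> * c0) - 1) + \<mu> 1 * (exp (\<theta> * c1) - 1))"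
proof -
  define c where "c i = (if i = 0 then c0 else c1)" for i :: nat
  define S where "S = {\<omega>\<in>space M. t \<le> c0 * real (Z 0 \<omega>) + c1 * real (Z 1 \<omega>)}"
  define X where "X i \<omega> = ennreal (exp (\<theta> * c i * real (Z i \<omega>)))" for i \<omega>
  have "S \<in> sets M" unfolding S_def using borel_measurable_Z by measurable
  then have "emeasure M S = (\<integral>\<^sup>+\<omega>. indicator S \<omega> \<partial>M)" by simp
  also have "\<dots> \<le> (\<integral>\<^sup>+\<omega>. ennreal (exp (- \<theta> * t)) * (\<Prod>i\<in>{0,1}. X i \<omega>) \<partial>M)"
  proof (rule nn_integral_mono)
    fix \<omega>
    have eq: "ennreal (exp (- \<theta> * t)) * (\<Prod>i\<in>{0,1}. X i \<omega>)
        = ennreal (exp (\<theta> * (c0 * real (Z 0 \<omega>) + c1 * real (Z 1 \<omega>) - t)))"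
      by (simp add: X_def c_def ennreal_mult[symmetric] exp_add[symmetric] algebra_simps)
    show "indicator S \<omega> \<le> ennreal (exp (- \<theta> * t)) * (\<Prod>i\<in>{0,1}. X i \<omega>)"
      unfolding eq using \<open>\<theta> \<ge> 0\<close> by (auto simp: S_def indicator_def)
  qed
  also have "\<dots> = ennreal (exp (- \<theta> * t)) * (\<Prod>i\<in>{0,1}. \<integral>\<^sup>+\<omega>. X i \<omega> \<partial>M)"
  proof -
    have "indep_vars (\<lambda>_. borel) X {0,1}"
      unfolding X_def
      by (rule indep_vars_compose2[OF indep_Z, where Y="\<lambda>i k. ennreal (exp (\<theta> * c i * real k))"]) simp
    then have "(\<integral>\<^sup>+\<omega>. (\<Prod>i\<in>{0,1}. X i \<omega>) \<partial>M) = (\<Prod>i\<in>{0,1}. \<integral>\<^sup>+\<omega>. X i \<omega> \<partial>M)"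
      by (intro indep_vars_nn_integral) auto
    moreover have "(\<integral>\<^sup>+\<omega>. ennreal (exp (- \<theta> * t)) * (\<Prod>i\<in>{0,1}. X i \<omega>) \<partial>M)
        = ennreal (exp (- \<theta> * t)) * (\<integral>\<^sup>+\<omega>. (\<Prod>i\<in>{0,1}. X i \<omega>) \<partial>M)"
      by (rule nn_integral_cmult) (unfold X_def, use borel_measurable_Z in measurable)
    ultimately show ?thesis by simp
  qed
  also have "\<dots> = ennreal (exp (- \<theta> * t)) * (\<Prod>i\<in>{0::nat,1}. ennreal (exp (\<mu> i * (exp (\<theta> * c i) - 1))))"
    unfolding X_def by (intro arg_cong2[where f="(*)"] prod.cong refl poisson_nn_integral_exp
        measurable_Z distr_Z mean_nonneg)
  also have "\<dots> = ennreal (exp (- \<theta> * t + \<mu> 0 * (exp (\<theta> * c0) - 1) + \<mu> 1 * (exp (\<theta> * c1) - 1)))"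
    by (simp add: c_def ennreal_mult[symmetric] exp_add[symmetric])
  finally show ?thesis unfolding S_def by (simp add: emeasure_eq_measure)
qed

definition bernstein_event :: "real \<Rightarrow> real \<Rightarrow> real \<Rightarrow> 'a set" where
  "bernstein_event x c0 c1 = {\<omega>\<in>space M. sqrt (2 * (\<mu> 0 + \<mu> 1) * x) + x / 3
     \<le> c0 * (real (Z 0 \<omega>) - \<mu> 0) + c1 * (real (Z 1 \<omega>) - \<mu> 1)}"

lemma sets_bernstein_event: "bernstein_event x c0 c1 \<in> sets M"
  unfolding bernstein_event_def using borel_measurable_Z by measurable

lemma prob_bernstein_event:
  assumes c0: "\<bar>c0\<bar> = 1" and c1: "\<bar>c1\<bar> = 1" and x: "x \<ge> 0"
  shows "prob (bernstein_event x c0 c1) \<le> exp (- x)"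
proof -
  define v where "v = \<mu> 0 + \<mu> 1"
  define t where "t = sqrt (2 * v * x) + x / 3"
  have set_eq: "bernstein_event x c0 c1 = {\<omega>\<in>space M. t + c0 * \<mu> 0 + c1 * \<mu> 1 \<le> c0 * real (Z 0 \<omega>) + c1 * real (Z 1 \<omega>)}"
    unfolding bernstein_event_def t_def v_def right_diff_distrib
    by (intro Collect_cong conj_cong refl) linarith
  have centred: "prob {\<omega>\<in>space M. t + c0 * \<mu> 0 + c1 * \<mu> 1 \<le> c0 * real (Z 0 \<omega>) + c1 * real (Z 1 \<omega>)}
      \<le> exp (- \<theta> * t + \<mu> 0 * (exp (\<theta> * c0) - 1 - \<theta> * c0) + \<mu> 1 * (exp (\<theta> * c1) - 1 - \<theta> * c1))"
    if "\<theta> \<ge> 0" for \<theta>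
    using chernoff[OF that, of "t + c0 * \<mu> 0 + c1 * \<mu> 1" c0 c1] by (simp add: algebra_simps)
  show ?thesis
  proof (cases "v = 0")
    case True
    then have "\<mu> 0 = 0" "\<mu> 1 = 0" "- 3 * t = - x"
      using mean_nonneg[of 0] mean_nonneg[of 1] by (auto simp: v_def t_def)
    then show ?thesis using centred[of 3] unfolding set_eq by simp
  next
    case False
    then have "v > 0" using mean_nonneg[of 0] mean_nonneg[of 1] by (auto simp: v_def)
    define \<theta> where "\<theta> = 3 * sqrt (2 * v * x) / (3 * v + sqrt (2 * v * x))"
    note \<theta> = bernstein_exponent[OF \<open>v > 0\<close> x, folded \<theta>_def]
    have remainder: "exp (\<theta> * c) - 1 - \<theta> * c \<le> \<theta>\<^sup>2 / (2 * (1 - \<theta> / 3))" if "\<bar>c\<bar> = 1" for c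
    proof -
      have "\<bar>\<theta> * c\<bar> = \<theta>" using \<theta>(1) that by (simp add: abs_mult)
      moreover have "(\<theta> * c)\<^sup>2 = \<theta>\<^sup>2" using that by (metis power2_abs power_mult_distrib abs_mult mult.right_neutral)
      ultimately show ?thesis using exp_remainder_le[of "\<theta> * c"] \<theta>(2) by simp
    qed
    have "\<mu> 0 * (exp (\<theta> * c0) - 1 - \<theta> * c0) + \<mu> 1 * (exp (\<theta> * c1) - 1 - \<theta> * c1)
        \<le> \<mu> 0 * (\<theta>\<^sup>2 / (2 * (1 - \<theta> / 3))) + \<mu> 1 * (\<theta>\<^sup>2 / (2 * (1 - \<theta> / 3)))"
      using remainder[OF c0] remainder[OF c1] mean_nonneg[of 0] mean_nonneg[of 1]
      by (intro add_mono mult_left_mono)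
    also have "\<dots> = v * (\<theta>\<^sup>2 / (2 * (1 - \<theta> / 3)))" unfolding v_def by (simp only: distrib_right)
    finally have "- \<theta> * t + \<mu> 0 * (exp (\<theta> * c0) - 1 - \<theta> * c0) + \<mu> 1 * (exp (\<theta> * c1) - 1 - \<theta> * c1) \<le> - x"
      using \<theta>(3) unfolding t_def by linarith
    then show ?thesis unfolding set_eq using centred[OF \<theta>(1)] by (meson exp_le_cancel_iff order_trans)
  qed
qed

end

text \<open>Inverting the lower Bernstein deviation turns the observed count \<open>S\<close> into an upper
  confidence bound for the Poisson variance \<open>v\<close>.\<close>
lemma variance_le_of_lower_deviation:
  fixes v x S :: real
  assumes v: "v \<ge> 0" and x: "x \<ge> 0" and S: "S \<ge> 0"
    and dev: "v - sqrt (2 * v * x) - x / 3 < S"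
  shows "v \<le> S + sqrt (2 * x * S) + 3 * x"
proof -
  define w a r where "w = sqrt v" and "a = sqrt (2 * x)" and "r = sqrt S"
  have a0: "a \<ge> 0" and r0: "r \<ge> 0" using x S by (auto simp: a_def r_def)
  have vw: "v = w * w" and xa: "2 * x = a * a" and Sr: "S = r * r"
    using v x S by (simp_all add: w_def a_def r_def)
  have wa: "sqrt (2 * v * x) = w * a" and ar: "sqrt (2 * x * S) = a * r"
    using v x S by (simp_all add: w_def a_def r_def real_sqrt_mult[symmetric] mult.assoc)
  have dev': "w * w - w * a - a * a / 6 < r * r" using dev vw xa Sr wa by linarith
  have "w * w \<le> r * r + a * r + 3 * (a * a) / 2"
  proof (cases "w \<le> 4 * a / 3")
    case True
    have "w * a \<le> 4 * a / 3 * a" using True a0 by (rule mult_right_mono)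
    then show ?thesis using dev' mult_nonneg_nonneg[OF a0 r0] by simp
  next
    case False
    have "w * a \<ge> 4 * a / 3 * a" using False a0 by (intro mult_right_mono) auto
    moreover have "(w - 4 * a / 3) * (w - 4 * a / 3) = w * w - 8 / 3 * (w * a) + 16 / 9 * (a * a)"
      by (simp add: algebra_simps)
    ultimately have "(w - 4 * a / 3) * (w - 4 * a / 3) < r * r"
      using dev' zero_le_square[of a] by linarith
    then have "w - 4 * a / 3 < r"
      using r0 mult_mono[of r "w - 4 * a / 3" r "w - 4 * a / 3"] by force
    then have "a * (w - 4 * a / 3) \<le> a * r" using a0 by (intro mult_left_mono) auto
    then show ?thesis using dev' by (simp add: algebra_simps)
  qed
  then show ?thesis using vw xa Sr ar by linarith
qed

text \<open>The threshold of the estimator in units of \<open>\<parallel>\<phi>\<^sub>\<lambda>\<parallel>\<^sub>\<infinity>/n\<close>, as a function of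
  \<open>x = g ln n\<close> and the number \<open>S\<close> of points in the support of \<open>\<phi>\<^sub>\<lambda>\<close>; its variance
  term \<open>S + \<surd>(2xS) + 3x\<close> is the confidence bound above.\<close>
definition bernstein_radius :: "real \<Rightarrow> real \<Rightarrow> real" where
  "bernstein_radius x S = sqrt (2 * x * (S + sqrt (2 * x * S) + 3 * x)) + x / 3"

context poisson_pair
begin

text \<open>The two-sided deviation of \<open>Z\<^sub>0 - Z\<^sub>1\<close> is covered by the two one-sided ones, as long as
  the total count does not deviate downwards.\<close>
lemma deviation_subset_bernstein_events:
  assumes x: "x \<ge> 0"
  shows "{\<omega>\<in>space M. bernstein_radius x (real (Z 0 \<omega>) + real (Z 1 \<omega>))
           \<le> \<bar>real (Z 0 \<omega>) - real (Z 1 \<omega>) - (\<mu> 0 - \<mu> 1)\<bar>}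
    \<subseteq> bernstein_event x 1 (-1) \<union> bernstein_event x (-1) 1 \<union> bernstein_event x (-1) (-1)"
proof
  fix \<omega> assume \<omega>: "\<omega> \<in> {\<omega>\<in>space M. bernstein_radius x (real (Z 0 \<omega>) + real (Z 1 \<omega>))
           \<le> \<bar>real (Z 0 \<omega>) - real (Z 1 \<omega>) - (\<mu> 0 - \<mu> 1)\<bar>}"
  define v S D where "v = \<mu> 0 + \<mu> 1" and "S = real (Z 0 \<omega>) + real (Z 1 \<omega>)"
    and "D = real (Z 0 \<omega>) - real (Z 1 \<omega>) - (\<mu> 0 - \<mu> 1)"
  have sp: "\<omega> \<in> space M" and radius: "bernstein_radius x S \<le> \<bar>D\<bar>"
    using \<omega> by (auto simp: S_def D_def)
  show "\<omega> \<in> bernstein_event x 1 (-1) \<union> bernstein_event x (-1) 1 \<union> bernstein_event x (-1) (-1)"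
  proof (cases "\<omega> \<in> bernstein_event x (-1) (-1)")
    case False
    then have "v - sqrt (2 * v * x) - x / 3 < S"
      using sp by (auto simp: bernstein_event_def S_def v_def)
    then have "v \<le> S + sqrt (2 * x * S) + 3 * x"
      using variance_le_of_lower_deviation[of v x S] mean_nonneg[of 0] mean_nonneg[of 1] x
      by (simp add: v_def S_def)
    then have "x * v \<le> x * (S + sqrt (2 * x * S) + 3 * x)"
      using x by (rule mult_left_mono)
    then have "2 * v * x \<le> 2 * x * (S + sqrt (2 * x * S) + 3 * x)"
      by (simp add: mult.commute)
    then have "sqrt (2 * v * x) \<le> sqrt (2 * x * (S + sqrt (2 * x * S) + 3 * x))"
      by (rule real_sqrt_le_mono)
    then have "sqrt (2 * v * x) + x / 3 \<le> \<bar>D\<bar>" using radius unfolding bernstein_radius_def by linarith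
    then show ?thesis
      using sp by (cases "D \<ge> 0") (auto simp: bernstein_event_def D_def v_def algebra_simps)
  qed simp
qed

lemma deviation_bound:
  assumes x: "x \<ge> 0"
  shows "prob {\<omega>\<in>space M. bernstein_radius x (real (Z 0 \<omega>) + real (Z 1 \<omega>))
           \<le> \<bar>real (Z 0 \<omega>) - real (Z 1 \<omega>) - (\<mu> 0 - \<mu> 1)\<bar>} \<le> 3 * exp (- x)"
proof -
  let ?T = "bernstein_event x"
  have "prob {\<omega>\<in>space M. bernstein_radius x (real (Z 0 \<omega>) + real (Z 1 \<omega>))
           \<le> \<bar>real (Z 0 \<omega>) - real (Z 1 \<omega>) - (\<mu> 0 - \<mu> 1)\<bar>}
      \<le> prob (?T 1 (-1) \<union> ?T (-1) 1 \<union> ?T (-1) (-1))"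
    using deviation_subset_bernstein_events[OF x] sets_bernstein_event
    by (intro finite_measure_mono) auto
  also have "\<dots> \<le> prob (?T 1 (-1)) + prob (?T (-1) 1) + prob (?T (-1) (-1))"
    using sets_bernstein_event by (intro order.trans[OF measure_Un_le] add_mono measure_Un_le) auto
  also have "\<dots> \<le> exp (- x) + exp (- x) + exp (- x)"
    using x by (intro add_mono prob_bernstein_event) auto
  finally show ?thesis by simp
qed

end

text \<open>Every \<open>\<phi>\<^sub>\<lambda>\<close> has the shape \<open>h\<^sub>\<lambda> (1\<^bsub>[left, mid]\<^esub> - 1\<^bsub>(mid, right]\<^esub>)\<close> on the dyadic interval
  \<open>[k/s, (k+1)/s]\<close>; for the father functions (\<open>j = -1\<close>) we put \<open>mid = right\<close>, so the
  negative part is empty.\<close>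
definition haar_scale :: "int \<times> int \<Rightarrow> real" where
  "haar_scale l = (if fst l = -1 then 1 else 2 powr real_of_int (fst l))"
definition haar_height :: "int \<times> int \<Rightarrow> real" where
  "haar_height l = (if fst l = -1 then 1 else 2 powr (real_of_int (fst l) / 2))"
definition haar_left :: "int \<times> int \<Rightarrow> real" where
  "haar_left l = real_of_int (snd l) / haar_scale l"
definition haar_mid :: "int \<times> int \<Rightarrow> real" where
  "haar_mid l = (if fst l = -1 then real_of_int (snd l) + 1 else (real_of_int (snd l) + 1/2) / haar_scale l)"
definition haar_right :: "int \<times> int \<Rightarrow> real" where
  "haar_right l = (real_of_int (snd l) + 1) / haar_scale l"
definition haar_pos :: "int \<times> int \<Rightarrow> real set" where
  "haar_pos l = {haar_left l..haar_mid l}"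
definition haar_neg :: "int \<times> int \<Rightarrow> real set" where
  "haar_neg l = {haar_mid l<..haar_right l}"

lemma haar_scale_pos: "haar_scale l > 0"
  by (simp add: haar_scale_def)

lemma haar_height_pos: "haar_height l > 0"
  by (simp add: haar_height_def)

lemma haar_left_le_mid: "haar_left l \<le> haar_mid l"
  and haar_mid_le_right: "haar_mid l \<le> haar_right l"
  using haar_scale_pos[of l]
  by (auto simp: haar_left_def haar_mid_def haar_right_def haar_scale_def divide_right_mono)

lemma haar_pos_neg_disjoint: "haar_pos l \<inter> haar_neg l = {}"
  by (auto simp: haar_pos_def haar_neg_def)

lemma sets_haar_pos [measurable]: "haar_pos l \<in> sets borel"
  and sets_haar_neg [measurable]: "haar_neg l \<in> sets borel"
  by (simp_all add: haar_pos_def haar_neg_def)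

lemma varphi_eq_indicators:
  "varphi l x = haar_height l * (indicator (haar_pos l) x - indicator (haar_neg l) x)"
proof (cases l)
  case (Pair j k)
  show ?thesis
  proof (cases "j = -1")
    case True
    then show ?thesis using Pair
      by (auto simp: varphi_def haar_phi_def haar_height_def haar_pos_def haar_neg_def haar_left_def
          haar_mid_def haar_right_def haar_scale_def indicator_def)
  next
    case False
    define s where "s = 2 powr real_of_int j"
    have s: "s > 0" by (simp add: s_def)
    have "(0 \<le> s * x - k \<and> s * x - k \<le> 1/2) \<longleftrightarrow> (k / s \<le> x \<and> x \<le> (k + 1/2) / s)"
      and "(1/2 < s * x - k \<and> s * x - k \<le> 1) \<longleftrightarrow> ((k + 1/2) / s < x \<and> x \<le> (k + 1) / s)"
      using s by (auto simp: field_simps)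
    then show ?thesis using Pair False
      by (simp add: varphi_def haar_psi_def haar_height_def haar_pos_def haar_neg_def haar_left_def
          haar_mid_def haar_right_def haar_scale_def indicator_def s_def[symmetric] mult.commute)
  qed
qed

lemma varphi_sq:
  "(varphi l x)\<^sup>2 = (haar_height l)\<^sup>2 * (indicator (haar_pos l) x + indicator (haar_neg l) x)"
  using haar_pos_neg_disjoint[of l] by (auto simp: varphi_eq_indicators indicator_def power_mult_distrib)

lemma borel_measurable_varphi: "varphi l \<in> borel_measurable borel"
  unfolding varphi_eq_indicators[abs_def] by measurable

lemma sup_norm_varphi: "sup_norm (varphi l) = haar_height l"
  unfolding sup_norm_def
proof (rule cSup_eq_maximum)
  have "varphi l (haar_left l) = haar_height l"
    using haar_left_le_mid[of l] by (simp add: varphi_eq_indicators haar_pos_def haar_neg_def)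
  then show "haar_height l \<in> range (\<lambda>x. \<bar>varphi l x\<bar>)"
    using haar_height_pos[of l] by (metis abs_of_pos rangeI)
  fix y assume "y \<in> range (\<lambda>x. \<bar>varphi l x\<bar>)"
  then show "y \<le> haar_height l"
    using haar_height_pos[of l] haar_pos_neg_disjoint[of l]
    by (auto simp: varphi_eq_indicators indicator_def abs_mult)
qed

definition interval_overlap :: "real \<Rightarrow> real \<Rightarrow> real \<Rightarrow> real \<Rightarrow> real" where
  "interval_overlap a b c d = max 0 (min b d - max a c)"

lemma measure_between_Ioo_Icc:
  assumes "S \<in> sets borel" "{a<..<b} \<subseteq> S" "S \<subseteq> {a..b::real}"
  shows "measure lborel S = max 0 (b - a)"
proof (cases "a \<le> b")
  case True
  have Icc: "{a..b} \<in> fmeasurable lborel" using fmeasurable_cbox[of a b] by simp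
  then have "S \<in> fmeasurable lborel" using assms by (intro fmeasurableI2[OF Icc]) auto
  have "measure lborel {a<..<b} \<le> measure lborel S"
    by (rule measure_mono_fmeasurable) (use assms \<open>S \<in> fmeasurable lborel\<close> in auto)
  moreover have "measure lborel S \<le> measure lborel {a..b}"
    by (rule measure_mono_fmeasurable) (use assms Icc in auto)
  ultimately
  show ?thesis using True by (simp add: measure_lborel_Ioo measure_lborel_Icc)
qed (use assms in auto)

lemma measure_Int_interval_overlap:
  assumes "I \<in> sets borel" "{a<..<b} \<subseteq> I" "I \<subseteq> {a..b::real}"
    and "J \<in> sets borel" "{c<..<d} \<subseteq> J" "J \<subseteq> {c..d::real}"
  shows "measure lborel (I \<inter> J) = interval_overlap a b c d"
  unfolding interval_overlap_def
  by (rule measure_between_Ioo_Icc) (use assms in \<open>auto simp: subset_eq\<close>)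

lemma integrable_indicator_bounded:
  "S \<in> sets borel \<Longrightarrow> S \<subseteq> {a..b::real} \<Longrightarrow> integrable lborel (indicator S :: real \<Rightarrow> real)"
  using fmeasurableI2[of "{a..b}" lborel S] fmeasurable_cbox[of a b]
  by (auto simp: integrable_indicator_iff fmeasurable_def)

definition haar_overlap :: "int \<times> int \<Rightarrow> int \<times> int \<Rightarrow> real" where
  "haar_overlap l l' =
     interval_overlap (haar_left l) (haar_mid l) (haar_left l') (haar_mid l')
     - interval_overlap (haar_left l) (haar_mid l) (haar_mid l') (haar_right l')
     - interval_overlap (haar_mid l) (haar_right l) (haar_left l') (haar_mid l')
     + interval_overlap (haar_mid l) (haar_right l) (haar_mid l') (haar_right l')"

lemma integral_varphi_mult:
  "(LINT x|lborel. varphi l x * varphi l' x) = haar_height l * haar_height l' * haar_overlap l l'"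
proof -
  let ?i = "\<lambda>A B x. indicator (A \<inter> B) x :: real"
  let ?P = haar_pos and ?Q = haar_neg
  have "varphi l x * varphi l' x = haar_height l * haar_height l' *
     (?i (?P l) (?P l') x - ?i (?P l) (?Q l') x - ?i (?Q l) (?P l') x + ?i (?Q l) (?Q l') x)" for x
    by (simp add: varphi_eq_indicators indicator_inter_arith algebra_simps)
  moreover have "integrable lborel (?i A B)"
    if "A \<in> {?P l, ?Q l}" "B \<in> {?P l', ?Q l'}" for A B
    using that haar_left_le_mid[of l] haar_mid_le_right[of l]
    by (intro integrable_indicator_bounded[of _ "haar_left l" "haar_right l"])
      (auto simp: haar_pos_def haar_neg_def)
  moreover have "measure lborel (?P l \<inter> ?P l') = interval_overlap (haar_left l) (haar_mid l) (haar_left l') (haar_mid l')"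
     "measure lborel (?P l \<inter> ?Q l') = interval_overlap (haar_left l) (haar_mid l) (haar_mid l') (haar_right l')"
     "measure lborel (?Q l \<inter> ?P l') = interval_overlap (haar_mid l) (haar_right l) (haar_left l') (haar_mid l')"
     "measure lborel (?Q l \<inter> ?Q l') = interval_overlap (haar_mid l) (haar_right l) (haar_mid l') (haar_right l')"
    by (rule measure_Int_interval_overlap; auto simp: haar_pos_def haar_neg_def)+
  ultimately show ?thesis by (simp add: haar_overlap_def)
qed

lemma interval_overlap_eq_0: "b \<le> c \<or> d \<le> a \<Longrightarrow> interval_overlap a b c d = 0"
  unfolding interval_overlap_def by linarith

lemma interval_overlap_halves:
  assumes "a \<le> b" "w > 0" "a \<le> p \<or> p + w \<le> a" "b \<le> p \<or> p + w \<le> b"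
  shows "interval_overlap a b p (p + w / 2) = interval_overlap a b (p + w / 2) (p + w)"
  using assms unfolding interval_overlap_def by (smt (verit, best) field_sum_of_halves)

lemma int_div_le_or_ge:
  fixes m k :: int and s :: real assumes "s > 0"
  shows "m / s \<le> k / s \<or> (real_of_int k + 1) / s \<le> m / s"
proof (cases "m \<le> k")
  case False
  then have "real_of_int k + 1 \<le> real_of_int m" by linarith
  then show ?thesis using assms by (simp add: divide_right_mono)
qed (use assms in \<open>simp add: divide_right_mono\<close>)

lemma haar_breakpoints_on_finer_grid:
  assumes j: "fst l \<ge> -1" and jj: "fst l < fst l'" and b: "b \<in> {haar_left l, haar_mid l, haar_right l}"
  shows "\<exists>m::int. b = m / haar_scale l'"
proof -
  obtain j k j' k' where l: "l = (j, k)" and l': "l' = (j', k')" by (cases l, cases l')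
  have "j < j'" "j' \<ge> 0" using j jj by (auto simp: l l')
  define d where "d = nat (j' - (if j = -1 then 0 else j))"
  have d1: "d \<ge> 1 \<or> j = -1" using \<open>j < j'\<close> by (auto simp: d_def)
  have "2 powr real_of_int j' = (if j = -1 then 1 else 2 powr real_of_int j) * 2 ^ d"
    using \<open>j < j'\<close> \<open>j' \<ge> 0\<close>
    by (auto simp: d_def powr_realpow[symmetric] powr_add[symmetric])
  then have sl': "haar_scale l' = haar_scale l * 2 ^ d"
    using \<open>j' \<ge> 0\<close> by (simp add: haar_scale_def l l')
  have "\<exists>m::int. b * haar_scale l' = m"
  proof (cases "j = -1")
    case True
    then have "haar_scale l = 1" by (simp add: haar_scale_def l)
    then have "haar_left l * haar_scale l' = of_int (k * 2 ^ d)"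
      "haar_mid l * haar_scale l' = of_int ((k + 1) * 2 ^ d)"
      "haar_right l * haar_scale l' = of_int ((k + 1) * 2 ^ d)"
      using True by (simp_all add: sl' l haar_left_def haar_mid_def haar_right_def)
    then show ?thesis using b by blast
  next
    case False
    then have "(2::real) ^ d = 2 * 2 ^ (d - 1)" using d1 by (simp add: power_eq_if)
    then have "haar_left l * haar_scale l' = of_int (k * 2 ^ d)"
      "haar_mid l * haar_scale l' = of_int ((2 * k + 1) * 2 ^ (d - 1))"
      "haar_right l * haar_scale l' = of_int ((k + 1) * 2 ^ d)"
      using haar_scale_pos[of l] False
      by (simp_all add: sl' l haar_left_def haar_mid_def haar_right_def field_simps)
    then show ?thesis using b by blast
  qed
  then obtain m :: int where "b * haar_scale l' = m" ..
  then show ?thesis using haar_scale_pos[of l'] by (intro exI[of _ m]) (simp add: field_simps)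
qed

lemma haar_overlap_finer:
  assumes "fst l \<ge> -1" "fst l < fst l'"
  shows "haar_overlap l l' = 0"
proof -
  have "fst l' \<ge> 0" using assms by simp
  define w where "w = 1 / haar_scale l'"
  have w: "w > 0" using haar_scale_pos[of l'] by (simp add: w_def)
  have shape: "haar_mid l' = haar_left l' + w / 2" "haar_right l' = haar_left l' + w"
    using \<open>fst l' \<ge> 0\<close> haar_scale_pos[of l']
    by (auto simp: w_def haar_left_def haar_mid_def haar_right_def add_divide_distrib)
  have side: "b \<le> haar_left l' \<or> haar_left l' + w \<le> b"
    if b: "b \<in> {haar_left l, haar_mid l, haar_right l}" for b
  proof -
    obtain m :: int where "b = m / haar_scale l'"
      using haar_breakpoints_on_finer_grid[OF assms b] by blast
    then show ?thesis using int_div_le_or_ge[OF haar_scale_pos[of l'], of m "snd l'"]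
      by (simp add: w_def haar_left_def add_divide_distrib)
  qed
  show ?thesis unfolding haar_overlap_def shape
    using interval_overlap_halves[OF haar_left_le_mid w, where p = "haar_left l'"]
      interval_overlap_halves[OF haar_mid_le_right w, where p = "haar_left l'"] side
    by simp
qed

lemma haar_overlap_same_level:
  assumes "fst l = fst l'" "snd l \<noteq> snd l'"
  shows "haar_overlap l l' = 0"
proof -
  have s: "haar_scale l = haar_scale l'" using assms by (simp add: haar_scale_def)
  have "real_of_int (snd l) + 1 \<le> real_of_int (snd l') \<or> real_of_int (snd l') + 1 \<le> real_of_int (snd l)"
    using assms by linarith
  then have "haar_right l \<le> haar_left l' \<or> haar_right l' \<le> haar_left l"
    using haar_scale_pos[of l] s by (auto simp: haar_right_def haar_left_def intro!: divide_right_mono)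
  then show ?thesis
    using haar_left_le_mid[of l] haar_mid_le_right[of l] haar_left_le_mid[of l'] haar_mid_le_right[of l']
    unfolding haar_overlap_def by (elim disjE) (simp_all add: interval_overlap_eq_0)
qed

lemma haar_overlap_self: "fst l \<ge> -1 \<Longrightarrow> haar_height l * haar_height l * haar_overlap l l = 1"
proof -
  have "(haar_height l)\<^sup>2 * (haar_right l - haar_left l) = 1" if "fst l \<ge> -1"
  proof (cases "fst l = -1")
    case False
    have "(2 powr (real_of_int (fst l) / 2))\<^sup>2 = (2::real) powr real_of_int (fst l)"
      by (simp add: powr_powr[symmetric] power2_eq_square powr_add[symmetric])
    then show ?thesis using False
      by (simp add: haar_height_def haar_right_def haar_left_def haar_scale_def diff_divide_distrib[symmetric])
  qed (simp add: haar_height_def haar_right_def haar_left_def haar_scale_def)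
  moreover have "haar_overlap l l = haar_right l - haar_left l"
    using haar_left_le_mid[of l] haar_mid_le_right[of l]
    by (simp add: haar_overlap_def interval_overlap_def)
  ultimately show "fst l \<ge> -1 \<Longrightarrow> ?thesis" by (simp add: power2_eq_square)
qed

lemma haar_overlap_commute: "haar_overlap l l' = haar_overlap l' l"
  by (simp add: haar_overlap_def interval_overlap_def min.commute max.commute)

lemma varphi_orthonormal:
  assumes "fst l \<ge> -1" "fst l' \<ge> -1"
  shows "(LINT x|lborel. varphi l x * varphi l' x) = (if l = l' then 1 else 0)"
proof -
  have ordered: "haar_overlap a b = 0" if "fst a \<ge> -1" "a \<noteq> b" "fst a \<le> fst b" for a b
  proof (cases "fst a = fst b")
    case True
    then show ?thesis using that by (intro haar_overlap_same_level) (auto simp: prod_eq_iff)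
  qed (use that haar_overlap_finer in auto)
  have "haar_overlap l l' = 0" if "l \<noteq> l'"
    using ordered[of l l'] ordered[of l' l] that assms haar_overlap_commute[of l l'] by fastforce
  then show ?thesis using haar_overlap_self[OF assms(1)] by (auto simp: integral_varphi_mult)
qed

definition square_integrable :: "(real \<Rightarrow> real) \<Rightarrow> bool" where
  "square_integrable g \<longleftrightarrow> g \<in> borel_measurable lborel \<and> integrable lborel (\<lambda>x. (g x)\<^sup>2)"

definition inner_L2 :: "(real \<Rightarrow> real) \<Rightarrow> (real \<Rightarrow> real) \<Rightarrow> real" where
  "inner_L2 g h = (LINT x|lborel. g x * h x)"

lemma integrable_mult_square_integrable:
  assumes "square_integrable g" "square_integrable h"
  shows "integrable lborel (\<lambda>x. g x * h x)"
proof (rule Bochner_Integration.integrable_bound)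
  show "integrable lborel (\<lambda>x. (g x)\<^sup>2 + (h x)\<^sup>2)"
    using assms by (auto simp: square_integrable_def)
  show "(\<lambda>x. g x * h x) \<in> borel_measurable lborel"
    using assms by (auto simp: square_integrable_def)
  have "\<bar>a * b\<bar> \<le> a\<^sup>2 + b\<^sup>2" for a b :: real
    using sum_squares_bound[of "\<bar>a\<bar>" "\<bar>b\<bar>"] mult_nonneg_nonneg[OF abs_ge_zero[of a] abs_ge_zero[of b]]
    unfolding abs_mult power2_abs by linarith
  then show "AE x in lborel. norm (g x * h x) \<le> norm ((g x)\<^sup>2 + (h x)\<^sup>2)"
    by (intro AE_I2) simp
qed

lemma square_integrable_add:
  assumes "square_integrable g" "square_integrable h"
  shows "square_integrable (\<lambda>x. g x + h x)"
proof -
  have "integrable lborel (\<lambda>x. (g x)\<^sup>2 + (h x)\<^sup>2 + 2 * (g x * h x))"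
    using assms integrable_mult_square_integrable[OF assms] by (auto simp: square_integrable_def)
  moreover have "(g x + h x)\<^sup>2 = (g x)\<^sup>2 + (h x)\<^sup>2 + 2 * (g x * h x)" for x
    by (simp add: power2_eq_square algebra_simps)
  ultimately show ?thesis using assms by (auto simp: square_integrable_def)
qed

lemma square_integrable_cmult: "square_integrable g \<Longrightarrow> square_integrable (\<lambda>x. c * g x)"
  by (auto simp: square_integrable_def power_mult_distrib)

lemma square_integrable_diff:
  "square_integrable g \<Longrightarrow> square_integrable h \<Longrightarrow> square_integrable (\<lambda>x. g x - h x)"
  using square_integrable_add[OF _ square_integrable_cmult[of h "-1"], of g] by simp

lemma square_integrable_sum:
  "(\<And>i. i \<in> F \<Longrightarrow> square_integrable (e i)) \<Longrightarrow> square_integrable (\<lambda>x. \<Sum>i\<in>F. c i * e i x)"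
proof (induction F rule: infinite_finite_induct)
  case (insert i F)
  then show ?case by (simp add: square_integrable_add square_integrable_cmult)
qed (simp_all add: square_integrable_def)

lemma inner_L2_commute: "inner_L2 g h = inner_L2 h g"
  by (simp add: inner_L2_def mult.commute)

lemma inner_L2_self_nonneg: "inner_L2 g g \<ge> 0"
  unfolding inner_L2_def by (rule integral_nonneg_AE) simp

lemma inner_L2_diff_left:
  "square_integrable g1 \<Longrightarrow> square_integrable g2 \<Longrightarrow> square_integrable h
     \<Longrightarrow> inner_L2 (\<lambda>x. g1 x - g2 x) h = inner_L2 g1 h - inner_L2 g2 h"
  unfolding inner_L2_def
  using integrable_mult_square_integrable[of g1 h] integrable_mult_square_integrable[of g2 h]
  by (simp add: left_diff_distrib)

lemma inner_L2_diff_right: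
  "square_integrable g1 \<Longrightarrow> square_integrable g2 \<Longrightarrow> square_integrable h
     \<Longrightarrow> inner_L2 h (\<lambda>x. g1 x - g2 x) = inner_L2 h g1 - inner_L2 h g2"
  using inner_L2_diff_left[of g1 g2 h] by (simp add: inner_L2_commute)

lemma inner_L2_sum_left:
  assumes "\<And>i. i \<in> F \<Longrightarrow> square_integrable (e i)" "square_integrable h"
  shows "inner_L2 (\<lambda>x. \<Sum>i\<in>F. c i * e i x) h = (\<Sum>i\<in>F. c i * inner_L2 (e i) h)"
proof -
  have "inner_L2 (\<lambda>x. \<Sum>i\<in>F. c i * e i x) h = (LINT x|lborel. (\<Sum>i\<in>F. c i * (e i x * h x)))"
    unfolding inner_L2_def by (simp add: sum_distrib_right mult.assoc)
  also have "\<dots> = (\<Sum>i\<in>F. LINT x|lborel. c i * (e i x * h x))"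
    by (rule Bochner_Integration.integral_sum) (use assms integrable_mult_square_integrable in auto)
  finally show ?thesis by (simp add: inner_L2_def)
qed

lemma inner_L2_sum_orthonormal:
  assumes e: "\<And>i. i \<in> F \<Longrightarrow> square_integrable (e i)"
    and on: "\<And>i j. i \<in> F \<Longrightarrow> j \<in> F \<Longrightarrow> inner_L2 (e i) (e j) = (if i = j then 1 else 0)"
    and "finite F" "j \<in> F"
  shows "inner_L2 (\<lambda>x. \<Sum>i\<in>F. c i * e i x) (e j) = c j"
proof -
  have "inner_L2 (\<lambda>x. \<Sum>i\<in>F. c i * e i x) (e j) = (\<Sum>i\<in>F. c i * inner_L2 (e i) (e j))"
    by (rule inner_L2_sum_left[OF e e[OF \<open>j \<in> F\<close>]])
  also have "\<dots> = (\<Sum>i\<in>F. if i = j then c i else 0)"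
    using \<open>j \<in> F\<close> by (intro sum.cong) (auto simp: on)
  finally show ?thesis using assms(3,4) by simp
qed

lemma bessel_inequality:
  assumes h: "square_integrable h" and "finite F"
    and e: "\<And>i. i \<in> F \<Longrightarrow> square_integrable (e i)"
    and on: "\<And>i j. i \<in> F \<Longrightarrow> j \<in> F \<Longrightarrow> inner_L2 (e i) (e j) = (if i = j then 1 else 0)"
  shows "(\<Sum>i\<in>F. (inner_L2 h (e i))\<^sup>2) \<le> inner_L2 h h"
proof -
  define a where "a i = inner_L2 h (e i)" for i
  define P where "P x = (\<Sum>i\<in>F. a i * e i x)" for x
  have P: "square_integrable P" unfolding P_def using e by (rule square_integrable_sum)
  have P_eq: "P = (\<lambda>x. \<Sum>i\<in>F. a i * e i x)" by (simp add: P_def fun_eq_iff)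
  have "inner_L2 P h = (\<Sum>i\<in>F. a i * inner_L2 (e i) h)"
    using inner_L2_sum_left[OF e h, where c = a] unfolding P_eq .
  then have Ph: "inner_L2 P h = (\<Sum>i\<in>F. (a i)\<^sup>2)"
    by (simp add: a_def inner_L2_commute[of "e _" h] power2_eq_square)
  have "inner_L2 P P = (\<Sum>i\<in>F. a i * inner_L2 (e i) P)"
    using inner_L2_sum_left[OF e P, where c = a] unfolding P_eq .
  also have "\<dots> = (\<Sum>i\<in>F. (a i)\<^sup>2)"
    using inner_L2_sum_orthonormal[OF e on \<open>finite F\<close>, where c = a]
    by (simp add: P_eq inner_L2_commute[of "e _"] power2_eq_square)
  finally have PP: "inner_L2 P P = (\<Sum>i\<in>F. (a i)\<^sup>2)" .
  have "0 \<le> inner_L2 (\<lambda>x. h x - P x) (\<lambda>x. h x - P x)" by (rule inner_L2_self_nonneg)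
  also have "\<dots> = inner_L2 h h - (\<Sum>i\<in>F. (a i)\<^sup>2)"
    using h P Ph PP
    by (simp add: inner_L2_diff_left inner_L2_diff_right square_integrable_diff inner_L2_commute[of h P])
  finally show ?thesis by (simp add: a_def)
qed

lemma Gamma_n_fst: "l \<in> Gamma_n n \<Longrightarrow> -1 \<le> fst l \<and> fst l \<le> j0 n"
  by (auto simp: Gamma_n_def Lambda_idx_def)

lemma square_integrable_varphi: "square_integrable (varphi l)"
proof -
  have "integrable lborel (indicator (haar_pos l) :: real \<Rightarrow> real)"
    "integrable lborel (indicator (haar_neg l) :: real \<Rightarrow> real)"
    using haar_left_le_mid[of l] haar_mid_le_right[of l]
    by (auto intro!: integrable_indicator_bounded[of _ "haar_left l" "haar_right l"]
        simp: haar_pos_def haar_neg_def)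
  then show ?thesis unfolding square_integrable_def varphi_sq using borel_measurable_varphi by simp
qed

lemma inner_L2_varphi:
  "l \<in> Gamma_n n \<Longrightarrow> l' \<in> Gamma_n n \<Longrightarrow> inner_L2 (varphi l) (varphi l') = (if l = l' then 1 else 0)"
  unfolding inner_L2_def by (intro varphi_orthonormal) (auto dest: Gamma_n_fst)

lemma inner_L2_varphi_on:
  "F \<subseteq> Gamma_n n \<Longrightarrow> l \<in> F \<Longrightarrow> l' \<in> F \<Longrightarrow> inner_L2 (varphi l) (varphi l') = (if l = l' then 1 else 0)"
  by (intro inner_L2_varphi) auto

lemma bessel_varphi:
  "square_integrable h \<Longrightarrow> finite F \<Longrightarrow> F \<subseteq> Gamma_n n
     \<Longrightarrow> (\<Sum>l\<in>F. (inner_L2 h (varphi l))\<^sup>2) \<le> inner_L2 h h"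
  by (rule bessel_inequality[OF _ _ square_integrable_varphi inner_L2_varphi_on])

lemma beta_hat_eq_counts:
  "beta_hat n X l = haar_height l / real n * (real (count_in (haar_pos l) X) - real (count_in (haar_neg l) X))"
  unfolding beta_hat_def varphi_eq_indicators
  by (induction X) (auto simp: count_in_def indicator_def field_simps)

lemma V_hat_eq_counts:
  "V_hat n X l = (haar_height l / real n)\<^sup>2 * (real (count_in (haar_pos l) X) + real (count_in (haar_neg l) X))"
  unfolding V_hat_def varphi_sq
  by (induction X) (auto simp: count_in_def indicator_def field_simps)

lemma eta_eq_bernstein_radius:
  "eta g n X l = haar_height l / real n *
     bernstein_radius (g * ln (real n)) (real (count_in (haar_pos l) X) + real (count_in (haar_neg l) X))"
proof -
  define c S x where "c = haar_height l / real n"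
    and "S = real (count_in (haar_pos l) X) + real (count_in (haar_neg l) X)"
    and "x = g * ln (real n)"
  have "c \<ge> 0" using haar_height_pos[of l] by (simp add: c_def)
  have V: "V_hat n X l = c\<^sup>2 * S" by (simp add: V_hat_eq_counts c_def S_def)
  have "sqrt (2 * g * ln (real n) * V_hat n X l * (sup_norm (varphi l))\<^sup>2 / (real n)\<^sup>2)
      = sqrt ((c\<^sup>2)\<^sup>2 * (2 * x * S))"
    by (simp add: V sup_norm_varphi c_def x_def power_divide field_simps power2_eq_square)
  also have "\<dots> = c\<^sup>2 * sqrt (2 * x * S)" by (simp only: real_sqrt_mult real_sqrt_abs abs_power2)
  finally have "V_tilde g n X l = c\<^sup>2 * (S + sqrt (2 * x * S) + 3 * x)"
    unfolding V_tilde_def by (simp add: V sup_norm_varphi c_def x_def power_divide algebra_simps)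
  then have "sqrt (2 * g * V_tilde g n X l * ln (real n)) = sqrt (c\<^sup>2 * (2 * x * (S + sqrt (2 * x * S) + 3 * x)))"
    by (simp add: x_def algebra_simps)
  also have "\<dots> = c * sqrt (2 * x * (S + sqrt (2 * x * S) + 3 * x))"
    using \<open>c \<ge> 0\<close> by (simp add: real_sqrt_mult)
  finally show ?thesis
    unfolding eta_def bernstein_radius_def S_def[symmetric] c_def[symmetric]
    by (simp add: sup_norm_varphi c_def x_def algebra_simps)
qed

definition kept :: "real \<Rightarrow> nat \<Rightarrow> real multiset \<Rightarrow> int \<times> int \<Rightarrow> bool" where
  "kept g n X l \<longleftrightarrow> eta g n X l \<le> \<bar>beta_hat n X l\<bar>"

definition hard_coeff :: "real \<Rightarrow> nat \<Rightarrow> real multiset \<Rightarrow> int \<times> int \<Rightarrow> real" where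
  "hard_coeff g n X l = (if kept g n X l then beta_hat n X l else 0)"

definition active_indices :: "nat \<Rightarrow> real multiset \<Rightarrow> (int \<times> int) set" where
  "active_indices n X = {l \<in> Gamma_n n. \<exists>t \<in># X. varphi l t \<noteq> 0}"

lemma beta_hat_inactive: "l \<notin> active_indices n X \<Longrightarrow> l \<in> Gamma_n n \<Longrightarrow> beta_hat n X l = 0"
  unfolding beta_hat_def active_indices_def by (auto intro: sum_mset.neutral)

text \<open>At level \<open>j\<close> a point \<open>t\<close> lies in the supports of at most two Haar functions,
  those with \<open>k \<in> {\<lfloor>s t\<rfloor> - 1, \<lfloor>s t\<rfloor>}\<close>.\<close>
definition indices_at :: "nat \<Rightarrow> real \<Rightarrow> (int \<times> int) set" where
  "indices_at n t = (\<Union>j\<in>{-1..j0 n}. (\<lambda>k. (j, k)) ` {\<lfloor>haar_scale (j, 0) * t\<rfloor> - 1..\<lfloor>haar_scale (j, 0) * t\<rfloor>})"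

lemma finite_indices_at: "finite (indices_at n t)"
  by (simp add: indices_at_def)

lemma card_indices_at: "card (indices_at n t) \<le> 2 * nat (j0 n + 2)"
proof -
  have "card (indices_at n t) \<le> (\<Sum>j\<in>{-1..j0 n}. card ((\<lambda>k. (j, k)) ` {\<lfloor>haar_scale (j, 0) * t\<rfloor> - 1..\<lfloor>haar_scale (j, 0) * t\<rfloor>}))"
    unfolding indices_at_def by (rule card_UN_le) simp
  also have "\<dots> \<le> (\<Sum>j\<in>{-1..j0 n}. 2)"
    by (intro sum_mono order.trans[OF card_image_le]) auto
  finally show ?thesis by simp
qed

lemma active_indices_subset: "active_indices n X \<subseteq> (\<Union>t\<in>set_mset X. indices_at n t)"
proof
  fix l assume "l \<in> active_indices n X"
  then obtain t where t: "t \<in># X" "varphi l t \<noteq> 0" and l: "l \<in> Gamma_n n"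
    by (auto simp: active_indices_def)
  define s where "s = haar_scale (fst l, 0)"
  have s: "s > 0" "haar_scale l = s" by (simp_all add: s_def haar_scale_def haar_scale_pos)
  have "t \<in> haar_pos l \<or> t \<in> haar_neg l"
    using t(2) by (auto simp: varphi_eq_indicators indicator_def split: if_splits)
  then have "haar_left l \<le> t" "t \<le> haar_right l"
    using haar_left_le_mid[of l] haar_mid_le_right[of l] by (auto simp: haar_pos_def haar_neg_def)
  then have "real_of_int (snd l) \<le> s * t" "s * t \<le> real_of_int (snd l) + 1"
    using s by (simp_all add: haar_left_def haar_right_def field_simps)
  then have "snd l \<le> \<lfloor>s * t\<rfloor>" "\<lfloor>s * t\<rfloor> \<le> snd l + 1"
    by (simp_all add: le_floor_iff floor_le_iff)
  then have "snd l \<in> {\<lfloor>s * t\<rfloor> - 1..\<lfloor>s * t\<rfloor>}" by simp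
  moreover have "fst l \<in> {-1..j0 n}" using Gamma_n_fst[OF l] by simp
  ultimately have "l \<in> indices_at n t"
    unfolding indices_at_def s_def by (auto intro!: bexI[of _ "fst l"] image_eqI[of _ _ "snd l"])
  then show "l \<in> (\<Union>t\<in>set_mset X. indices_at n t)" using t by auto
qed

lemma finite_active_indices: "finite (active_indices n X)"
  by (rule finite_subset[OF active_indices_subset]) (simp add: finite_indices_at)

lemma active_indices_Gamma_n: "active_indices n X \<subseteq> Gamma_n n"
  by (auto simp: active_indices_def)

lemma card_set_mset_le_size: "card (set_mset X) \<le> size X"
proof (induction X)
  case (add x X)
  have "card (set_mset (add_mset x X)) \<le> Suc (card (set_mset X))"
    by (simp add: card_insert_le_m1)
  then show ?case using add by simp
qed simp

lemma card_active_indices: "card (active_indices n X) \<le> size X * (2 * nat (j0 n + 2))"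
proof -
  have "card (active_indices n X) \<le> card (\<Union>t\<in>set_mset X. indices_at n t)"
    by (rule card_mono[OF _ active_indices_subset]) (simp add: finite_indices_at)
  also have "\<dots> \<le> (\<Sum>t\<in>set_mset X. card (indices_at n t))" by (rule card_UN_le) simp
  also have "\<dots> \<le> (\<Sum>t\<in>set_mset X. 2 * nat (j0 n + 2))"
    by (intro sum_mono card_indices_at)
  also have "\<dots> = card (set_mset X) * (2 * nat (j0 n + 2))" by simp
  also have "\<dots> \<le> size X * (2 * nat (j0 n + 2))"
    by (intro mult_right_mono card_set_mset_le_size) simp
  finally show ?thesis .
qed

lemma f_tilde_H_eq_sum:
  assumes "finite T" "active_indices n X \<subseteq> T" "T \<subseteq> Gamma_n n"
  shows "f_tilde_H n g X = (\<lambda>x. \<Sum>l\<in>T. hard_coeff g n X l * varphi l x)"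
proof
  fix x
  have "f_tilde_H n g X x = (\<Sum>\<^sub>\<infinity>l\<in>T. hard_coeff g n X l * varphi l x)"
    unfolding f_tilde_H_def
  proof (rule infsum_cong_neutral)
    fix l assume "l \<in> Gamma_n n - T"
    then show "beta_hat n X l * (if eta g n X l \<le> \<bar>beta_hat n X l\<bar> then 1 else 0) * varphi l x = 0"
      using assms(2) beta_hat_inactive[of l n X] by auto
  qed (use assms(3) in \<open>auto simp: hard_coeff_def kept_def\<close>)
  then show "f_tilde_H n g X x = (\<Sum>l\<in>T. hard_coeff g n X l * varphi l x)"
    using assms(1) by simp
qed

lemmas f_tilde_H_eq_active_sum =
  f_tilde_H_eq_sum[OF finite_active_indices subset_refl active_indices_Gamma_n]

lemma square_integrable_f_tilde_H: "square_integrable (f_tilde_H n g X)"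
  unfolding f_tilde_H_eq_active_sum by (intro square_integrable_sum square_integrable_varphi)

lemma inner_L2_f_tilde_H_varphi:
  assumes "l \<in> Gamma_n n"
  shows "inner_L2 (f_tilde_H n g X) (varphi l) = hard_coeff g n X l"
proof -
  let ?T = "insert l (active_indices n X)"
  have T: "finite ?T" "?T \<subseteq> Gamma_n n"
    using finite_active_indices active_indices_Gamma_n assms by auto
  have "f_tilde_H n g X = (\<lambda>x. \<Sum>l'\<in>?T. hard_coeff g n X l' * varphi l' x)"
    using T by (intro f_tilde_H_eq_sum) auto
  moreover have "inner_L2 (\<lambda>x. \<Sum>l'\<in>?T. hard_coeff g n X l' * varphi l' x) (varphi l) = hard_coeff g n X l"
    by (rule inner_L2_sum_orthonormal[OF square_integrable_varphi inner_L2_varphi_on[OF T(2)] T(1) insertI1])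
  ultimately show ?thesis by simp
qed

definition sq_loss :: "nat \<Rightarrow> real \<Rightarrow> (real \<Rightarrow> real) \<Rightarrow> real multiset \<Rightarrow> real" where
  "sq_loss n g f X = (LINT x|lborel. (f_tilde_H n g X x - f x)\<^sup>2)"

lemma sq_loss_eq_inner_L2:
  "sq_loss n g f X = inner_L2 (\<lambda>x. f_tilde_H n g X x - f x) (\<lambda>x. f_tilde_H n g X x - f x)"
  by (simp add: sq_loss_def inner_L2_def power2_eq_square)

lemma sq_loss_nonneg: "sq_loss n g f X \<ge> 0"
  unfolding sq_loss_eq_inner_L2 by (rule inner_L2_self_nonneg)

lemma beta_eq_inner_L2: "beta f l = inner_L2 f (varphi l)"
  by (simp add: beta_def inner_L2_def mult.commute)

text \<open>Bessel's inequality for \<open>f\<^sup>~ - f\<close>, whose coefficient at a discarded \<open>\<lambda>\<close> is \<open>-\<beta>\<^sub>\<lambda>\<close>.\<close>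
lemma sq_loss_ge_discarded:
  assumes f: "square_integrable f" and F: "finite F" "F \<subseteq> Gamma_n n"
  shows "(\<Sum>l\<in>F. (beta f l)\<^sup>2 * (if kept g n X l then 0 else 1)) \<le> sq_loss n g f X"
proof -
  define h where "h x = f_tilde_H n g X x - f x" for x
  have h: "square_integrable h"
    unfolding h_def using square_integrable_f_tilde_H f by (rule square_integrable_diff)
  have "(\<Sum>l\<in>F. (beta f l)\<^sup>2 * (if kept g n X l then 0 else 1)) \<le> (\<Sum>l\<in>F. (inner_L2 h (varphi l))\<^sup>2)"
  proof (rule sum_mono)
    fix l assume "l \<in> F"
    then have "inner_L2 h (varphi l) = hard_coeff g n X l - beta f l"
      using F unfolding h_def beta_eq_inner_L2
      by (subst inner_L2_diff_left) (auto simp: square_integrable_f_tilde_H f square_integrable_varphi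
          inner_L2_f_tilde_H_varphi)
    then show "(beta f l)\<^sup>2 * (if kept g n X l then 0 else 1) \<le> (inner_L2 h (varphi l))\<^sup>2"
      by (simp add: hard_coeff_def)
  qed
  also have "\<dots> \<le> inner_L2 h h" by (rule bessel_varphi[OF h F])
  finally show ?thesis by (simp add: sq_loss_eq_inner_L2 h_def[abs_def])
qed

lemma sq_loss_eq_sum:
  assumes f: "square_integrable f"
    and T: "finite T" "active_indices n X \<subseteq> T" "T \<subseteq> Gamma_n n"
  shows "sq_loss n g f X = (\<Sum>l\<in>T. (hard_coeff g n X l)\<^sup>2 - 2 * (hard_coeff g n X l * beta f l)) + inner_L2 f f"
proof -
  let ?t = "f_tilde_H n g X" and ?c = "hard_coeff g n X"
  have t: "square_integrable ?t" by (rule square_integrable_f_tilde_H)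
  have tt: "inner_L2 ?t ?t = (\<Sum>l\<in>T. (?c l)\<^sup>2)"
  proof -
    have "inner_L2 ?t ?t = (\<Sum>l\<in>T. ?c l * inner_L2 (varphi l) ?t)"
      by (subst (1) f_tilde_H_eq_sum[OF T]) (rule inner_L2_sum_left[OF square_integrable_varphi t])
    also have "\<dots> = (\<Sum>l\<in>T. (?c l)\<^sup>2)"
      using T(3) by (intro sum.cong) (auto simp: inner_L2_commute[of "varphi _"]
          inner_L2_f_tilde_H_varphi power2_eq_square)
    finally show ?thesis .
  qed
  have "inner_L2 ?t f = (\<Sum>l\<in>T. ?c l * inner_L2 (varphi l) f)"
    by (subst (1) f_tilde_H_eq_sum[OF T]) (rule inner_L2_sum_left[OF square_integrable_varphi f])
  then have tf: "inner_L2 ?t f = (\<Sum>l\<in>T. ?c l * beta f l)"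
    by (simp add: beta_eq_inner_L2 inner_L2_commute[of "varphi _"])
  have "sq_loss n g f X = inner_L2 ?t ?t - 2 * inner_L2 ?t f + inner_L2 f f"
    unfolding sq_loss_eq_inner_L2 using t f inner_L2_commute[of f ?t]
    by (simp add: inner_L2_diff_left inner_L2_diff_right square_integrable_diff)
  then show ?thesis using tt tf by (simp add: sum_subtractf sum_distrib_left)
qed

text \<open>The \<open>+ 1\<close> accounts for the father functions, of height \<open>1\<close>, whatever the sign of \<open>j0 n\<close>.\<close>
definition max_haar_height :: "nat \<Rightarrow> real" where
  "max_haar_height n = 2 powr (real_of_int (j0 n) / 2) + 1"

lemma max_haar_height_pos: "max_haar_height n > 0"
  by (simp add: max_haar_height_def add_pos_pos)

lemma haar_height_le_max: "l \<in> Gamma_n n \<Longrightarrow> haar_height l \<le> max_haar_height n"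
  using Gamma_n_fst[of l n]
  by (auto simp: haar_height_def max_haar_height_def intro: add_increasing2 powr_mono)

lemma abs_hard_coeff_le:
  assumes "l \<in> Gamma_n n"
  shows "\<bar>hard_coeff g n X l\<bar> \<le> max_haar_height n / real n * real (size X)"
proof -
  have "real (count_in A X) \<le> real (size X)" for A by (simp add: count_in_def)
  then have "\<bar>real (count_in (haar_pos l) X) - real (count_in (haar_neg l) X)\<bar> \<le> real (size X)"
    by (smt (verit) of_nat_0_le_iff)
  then have "\<bar>beta_hat n X l\<bar> \<le> haar_height l / real n * real (size X)"
    using haar_height_pos[of l] unfolding beta_hat_eq_counts abs_mult
    by (simp add: divide_right_mono mult_left_mono)
  also have "\<dots> \<le> max_haar_height n / real n * real (size X)"
    using haar_height_le_max[OF assms] by (intro mult_right_mono divide_right_mono) auto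
  finally show ?thesis using max_haar_height_pos[of n] by (simp add: hard_coeff_def)
qed

lemma hard_coeff_sq_le:
  "l \<in> Gamma_n n \<Longrightarrow> (hard_coeff g n X l)\<^sup>2 \<le> (max_haar_height n / real n * real (size X))\<^sup>2"
  using power_mono[OF abs_hard_coeff_le abs_ge_zero, of l n g X 2] by simp

text \<open>Only needed for the integrability of the loss.\<close>
lemma sq_loss_le_cube:
  assumes f: "square_integrable f"
  shows "sq_loss n g f X
    \<le> 4 * nat (j0 n + 2) * (max_haar_height n / real n)\<^sup>2 * real (size X) ^ 3 + 2 * inner_L2 f f"
proof -
  let ?T = "active_indices n X" and ?c = "hard_coeff g n X" and ?B = "max_haar_height n / real n * real (size X)"
  have "sq_loss n g f X = (\<Sum>l\<in>?T. (?c l)\<^sup>2 - 2 * (?c l * beta f l)) + inner_L2 f f"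
    by (rule sq_loss_eq_sum[OF f finite_active_indices subset_refl active_indices_Gamma_n])
  also have "\<dots> \<le> (\<Sum>l\<in>?T. 2 * (?c l)\<^sup>2 + (beta f l)\<^sup>2) + inner_L2 f f"
    using zero_le_power2[of "?c _ + beta f _"]
    by (intro add_right_mono sum_mono) (simp add: power2_eq_square algebra_simps)
  also have "\<dots> = 2 * (\<Sum>l\<in>?T. (?c l)\<^sup>2) + (\<Sum>l\<in>?T. (inner_L2 f (varphi l))\<^sup>2) + inner_L2 f f"
    by (simp add: sum.distrib sum_distrib_left beta_eq_inner_L2)
  also have "(\<Sum>l\<in>?T. (?c l)\<^sup>2) \<le> (\<Sum>l\<in>?T. ?B\<^sup>2)"
    using active_indices_Gamma_n by (intro sum_mono hard_coeff_sq_le) auto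
  also have "(\<Sum>l\<in>?T. (inner_L2 f (varphi l))\<^sup>2) \<le> inner_L2 f f"
    by (rule bessel_varphi[OF f finite_active_indices active_indices_Gamma_n])
  also have "(\<Sum>l\<in>?T. ?B\<^sup>2) \<le> real (size X * (2 * nat (j0 n + 2))) * ?B\<^sup>2"
  proof -
    have "real (card ?T) \<le> real (size X * (2 * nat (j0 n + 2)))"
      using card_active_indices[of n X] by linarith
    then show ?thesis by (simp add: mult_right_mono)
  qed
  finally show ?thesis by (simp add: power2_eq_square power3_eq_cube algebra_simps)
qed

lemma measurable_nat_pair_fun:
  fixes Z1 Z2 :: "'a \<Rightarrow> nat"
  assumes "Z1 \<in> M \<rightarrow>\<^sub>M count_space UNIV" "Z2 \<in> M \<rightarrow>\<^sub>M count_space UNIV"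
  shows "(\<lambda>\<omega>. F (Z1 \<omega>) (Z2 \<omega>) :: 'b) \<in> M \<rightarrow>\<^sub>M count_space UNIV"
proof -
  have "(\<lambda>\<omega>. F i (Z2 \<omega>)) \<in> M \<rightarrow>\<^sub>M count_space UNIV" for i :: nat
    by (rule measurable_compose_countable[where f = "\<lambda>j \<omega>. F i j", OF _ assms(2)]) simp
  then show ?thesis
    by (rule measurable_compose_countable[where f = "\<lambda>i \<omega>. F i (Z2 \<omega>)", OF _ assms(1)])
qed

locale haar_poisson_model =
  fixes f :: "real \<Rightarrow> real" and n :: nat and M :: "'a measure" and N :: "'a \<Rightarrow> real multiset"
  assumes f_nonneg: "\<And>x. f x \<ge> 0"
    and f_integrable: "integrable lborel f"
    and f_sq_integrable: "integrable lborel (\<lambda>x. (f x)\<^sup>2)"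
    and n_ge_1: "n \<ge> 1"
    and poisson: "poisson_process M N (density lborel (\<lambda>x. ennreal (real n * f x)))"
begin

abbreviation intensity :: "real measure" where
  "intensity \<equiv> density lborel (\<lambda>x. ennreal (real n * f x))"

sublocale prob_space M
  using poisson by (simp add: poisson_process_def)

lemma measurable_count_in: "A \<in> sets borel \<Longrightarrow> (\<lambda>\<omega>. count_in A (N \<omega>)) \<in> M \<rightarrow>\<^sub>M count_space UNIV"
  using poisson by (simp add: poisson_process_def)

lemma prob_count_in: "A \<in> sets borel \<Longrightarrow>
   prob {\<omega>\<in>space M. count_in A (N \<omega>) = k} = exp (- measure intensity A) * measure intensity A ^ k / fact k"
  using poisson by (simp add: poisson_process_def)

lemma indep_count_in: "A ` (I::nat set) \<subseteq> sets borel \<Longrightarrow> disjoint_family_on A I \<Longrightarrow>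
   indep_vars (\<lambda>_. count_space UNIV) (\<lambda>i \<omega>. count_in (A i) (N \<omega>)) I"
  using poisson by (simp add: poisson_process_def)

lemma square_integrable_f: "square_integrable f"
  using f_integrable f_sq_integrable by (auto simp: square_integrable_def)

lemma measure_intensity:
  assumes "A \<in> sets borel"
  shows "measure intensity A = real n * (LINT x|lborel. indicator A x * f x)"
proof -
  have int: "integrable lborel (\<lambda>x. indicator A x * (real n * f x))"
    using integrable_mult_indicator[OF _ integrable_mult_right[OF f_integrable]] assms by simp
  have "emeasure intensity A = (\<integral>\<^sup>+x. ennreal (real n * f x) * indicator A x \<partial>lborel)"
    using assms borel_measurable_integrable[OF f_integrable] by (simp add: emeasure_density)
  also have "\<dots> = (\<integral>\<^sup>+x. ennreal (indicator A x * (real n * f x)) \<partial>lborel)"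
    by (intro nn_integral_cong) (auto simp: indicator_def)
  also have "\<dots> = ennreal (LINT x|lborel. indicator A x * (real n * f x))"
    using int f_nonneg by (intro nn_integral_eq_integral) auto
  finally show ?thesis
    using f_nonneg by (simp add: measure_def integral_nonneg_AE mult.left_commute)
qed

lemma beta_eq_intensity:
  "beta f l = haar_height l / real n * (measure intensity (haar_pos l) - measure intensity (haar_neg l))"
proof -
  have int: "integrable lborel (\<lambda>x. indicator A x * f x)" if "A \<in> sets borel" for A
    using integrable_mult_indicator[of A lborel f] that f_integrable by simp
  have "beta f l = (LINT x|lborel. haar_height l * (indicator (haar_pos l) x * f x - indicator (haar_neg l) x * f x))"
    unfolding beta_def by (intro Bochner_Integration.integral_cong) (simp_all add: varphi_eq_indicators left_diff_distrib)
  also have "\<dots> = haar_height l * ((LINT x|lborel. indicator (haar_pos l) x * f x) - (LINT x|lborel. indicator (haar_neg l) x * f x))"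
    using int by simp
  finally show ?thesis using n_ge_1 by (simp add: measure_intensity right_diff_distrib)
qed

text \<open>Everything the estimator does with a fixed index \<open>\<lambda>\<close> depends on \<open>N\<close> only through the
  two counts on the positive and negative parts of \<open>\<phi>\<^sub>\<lambda>\<close>; this gives measurability.\<close>
lemma measurable_of_counts:
  assumes "\<And>X. h X = F (count_in (haar_pos l) X) (count_in (haar_neg l) X)"
  shows "(\<lambda>\<omega>. h (N \<omega>)) \<in> M \<rightarrow>\<^sub>M count_space UNIV"
  unfolding assms by (rule measurable_nat_pair_fun[OF measurable_count_in measurable_count_in]) simp_all

lemma borel_measurable_of_counts:
  assumes "\<And>X. h X = F (count_in (haar_pos l) X) (count_in (haar_neg l) X)"
  shows "(\<lambda>\<omega>. h (N \<omega>) :: real) \<in> borel_measurable M"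
  using measurable_compose[OF measurable_of_counts[where h = h and F = F and l = l, OF assms], of "\<lambda>x. x" borel]
  by (simp add: measurable_count_space)

lemma borel_measurable_beta_hat [measurable]: "(\<lambda>\<omega>. beta_hat n (N \<omega>) l) \<in> borel_measurable M"
  by (rule borel_measurable_of_counts[where l = l and F = "\<lambda>a b. haar_height l / real n * (real a - real b)"])
    (simp add: beta_hat_eq_counts)

lemma borel_measurable_eta [measurable]: "(\<lambda>\<omega>. eta g n (N \<omega>) l) \<in> borel_measurable M"
  by (rule borel_measurable_of_counts[where l = l and
        F = "\<lambda>a b. haar_height l / real n * bernstein_radius (g * ln (real n)) (real a + real b)"])
    (simp add: eta_eq_bernstein_radius)

lemma sets_kept [measurable]: "{\<omega>\<in>space M. kept g n (N \<omega>) l} \<in> sets M"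
  unfolding kept_def by measurable

lemma borel_measurable_hard_coeff [measurable]: "(\<lambda>\<omega>. hard_coeff g n (N \<omega>) l) \<in> borel_measurable M"
  unfolding hard_coeff_def by measurable

end

context haar_poisson_model
begin

lemma prob_deviation_ge_eta:
  assumes "g \<ge> 0"
  shows "prob {\<omega>\<in>space M. eta g n (N \<omega>) l \<le> \<bar>beta_hat n (N \<omega>) l - beta f l\<bar>} \<le> 3 * real n powr (- g)"
proof -
  define A where "A i = (if i = (0::nat) then haar_pos l else haar_neg l)" for i
  define Z where "Z i \<omega> = count_in (A i) (N \<omega>)" for i \<omega>
  define \<mu> where "\<mu> i = measure intensity (A i)" for i
  define x where "x = g * ln (real n)"
  define c where "c = haar_height l / real n"
  have "c > 0" using haar_height_pos[of l] n_ge_1 by (simp add: c_def)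
  have A: "A i \<in> sets borel" for i by (simp add: A_def)
  interpret poisson_pair M Z \<mu>
  proof
    show "Z i \<in> M \<rightarrow>\<^sub>M count_space UNIV" for i
      unfolding Z_def by (rule measurable_count_in[OF A])
    show "indep_vars (\<lambda>_. count_space UNIV) Z {0, 1}"
      unfolding Z_def using A haar_pos_neg_disjoint[of l]
      by (intro indep_count_in) (auto simp: disjoint_family_on_def A_def)
    show "prob {\<omega>\<in>space M. Z i \<omega> = k} = exp (- \<mu> i) * \<mu> i ^ k / fact k" for i k
      unfolding Z_def \<mu>_def by (rule prob_count_in[OF A])
  qed (simp add: \<mu>_def)
  have "{\<omega>\<in>space M. eta g n (N \<omega>) l \<le> \<bar>beta_hat n (N \<omega>) l - beta f l\<bar>}
    = {\<omega>\<in>space M. bernstein_radius x (real (Z 0 \<omega>) + real (Z 1 \<omega>))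
           \<le> \<bar>real (Z 0 \<omega>) - real (Z 1 \<omega>) - (\<mu> 0 - \<mu> 1)\<bar>}"
    using \<open>c > 0\<close>
    by (simp add: eta_eq_bernstein_radius beta_hat_eq_counts beta_eq_intensity c_def[symmetric]
        x_def Z_def \<mu>_def A_def right_diff_distrib[symmetric] abs_mult)
  also have "prob \<dots> \<le> 3 * exp (- x)"
    using assms n_ge_1 by (intro deviation_bound) (simp add: x_def)
  also have "exp (- x) = real n powr (- g)"
    using n_ge_1 by (simp add: powr_def x_def)
  finally show ?thesis .
qed

lemma prob_kept_le:
  assumes "g' \<ge> 0"
  shows "prob {\<omega>\<in>space M. kept g n (N \<omega>) l}
    \<le> 3 * real n powr (- g') + prob {\<omega>\<in>space M. eta g n (N \<omega>) l \<le> \<bar>beta f l\<bar> + eta g' n (N \<omega>) l}"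
proof -
  let ?D = "{\<omega>\<in>space M. eta g' n (N \<omega>) l \<le> \<bar>beta_hat n (N \<omega>) l - beta f l\<bar>}"
  let ?B = "{\<omega>\<in>space M. eta g n (N \<omega>) l \<le> \<bar>beta f l\<bar> + eta g' n (N \<omega>) l}"
  have "{\<omega>\<in>space M. kept g n (N \<omega>) l} \<subseteq> ?D \<union> ?B"
    by (auto simp: kept_def)
  then have "prob {\<omega>\<in>space M. kept g n (N \<omega>) l} \<le> prob (?D \<union> ?B)"
    by (intro finite_measure_mono) measurable
  also have "\<dots> \<le> prob ?D + prob ?B"
    by (intro measure_Un_le) measurable
  also have "\<dots> \<le> 3 * real n powr (- g') + prob ?B"
    using prob_deviation_ge_eta[OF assms] by simp
  finally show ?thesis .
qed

end

lemma finite_Gamma_n_bounded: "finite {l \<in> Gamma_n n. \<bar>snd l\<bar> \<le> m}"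
proof (rule finite_subset)
  show "{l \<in> Gamma_n n. \<bar>snd l\<bar> \<le> m} \<subseteq> {-1..j0 n} \<times> {- m..m}"
    using Gamma_n_fst by fastforce
qed simp

lemma real_cube_le_exp: "(real k) ^ 3 \<le> exp (3 * real k)"
proof -
  have "real k \<le> exp (real k)" using exp_ge_add_one_self[of "real k"] by linarith
  then have "(real k) ^ 3 \<le> (exp (real k)) ^ 3" by (intro power_mono) auto
  then show ?thesis by (simp add: exp_of_nat_mult[symmetric])
qed

context haar_poisson_model
begin

text \<open>The loss is not a finite sum of measurable functions of \<open>\<omega>\<close>, but for each \<open>\<omega>\<close> it
  eventually equals the sum over the indices with \<open>|k| \<le> m\<close>.\<close>
lemma borel_measurable_sq_loss: "(\<lambda>\<omega>. sq_loss n g f (N \<omega>)) \<in> borel_measurable M"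
proof (rule borel_measurable_LIMSEQ_real)
  define T where "T m = {l \<in> Gamma_n n. \<bar>snd l\<bar> \<le> int m}" for m
  define G where "G m \<omega> = (\<Sum>l\<in>T m. (hard_coeff g n (N \<omega>) l)\<^sup>2 - 2 * (hard_coeff g n (N \<omega>) l * beta f l))
    + inner_L2 f f" for m \<omega>
  show "G m \<in> borel_measurable M" for m
    unfolding G_def by measurable
  fix \<omega>
  define m0 where "m0 = nat (Max (insert 0 ((\<lambda>l. \<bar>snd l\<bar>) ` active_indices n (N \<omega>))))"
  have "active_indices n (N \<omega>) \<subseteq> T m" if "m \<ge> m0" for m
  proof
    fix l assume l: "l \<in> active_indices n (N \<omega>)"
    have "\<bar>snd l\<bar> \<le> Max (insert 0 ((\<lambda>l. \<bar>snd l\<bar>) ` active_indices n (N \<omega>)))"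
      using l finite_active_indices by (intro Max_ge) auto
    then show "l \<in> T m" using l active_indices_Gamma_n that by (auto simp: T_def m0_def)
  qed
  then have "\<forall>m\<ge>m0. G m \<omega> = sq_loss n g f (N \<omega>)"
    unfolding G_def T_def
    by (auto intro!: sq_loss_eq_sum[symmetric] square_integrable_f finite_Gamma_n_bounded)
  then show "(\<lambda>m. G m \<omega>) \<longlonglongrightarrow> sq_loss n g f (N \<omega>)"
    by (intro tendsto_eventually) (auto simp: eventually_sequentially)
qed

lemma integrable_exp_size: "integrable M (\<lambda>\<omega>. exp (3 * real (size (N \<omega>))))"
proof (rule integrableI_bounded)
  have size: "count_in UNIV X = size X" for X by (simp add: count_in_def)
  have "(\<lambda>\<omega>. size (N \<omega>)) \<in> M \<rightarrow>\<^sub>M count_space UNIV"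
    using measurable_count_in[of UNIV] by (simp add: size)
  then show "(\<lambda>\<omega>. exp (3 * real (size (N \<omega>)))) \<in> borel_measurable M"
    by (intro measurable_compose[OF _ borel_measurable_exp] borel_measurable_times)
      (auto intro: measurable_compose)
  have "(\<integral>\<^sup>+\<omega>. ennreal (norm (exp (3 * real (size (N \<omega>))))) \<partial>M)
      = (\<integral>\<^sup>+\<omega>. ennreal (exp (3 * real (count_in UNIV (N \<omega>)))) \<partial>M)"
    by (simp add: size)
  also have "\<dots> = ennreal (exp (measure intensity UNIV * (exp 3 - 1)))"
    by (rule poisson_nn_integral_exp[OF measurable_count_in prob_count_in]) simp_all
  finally show "(\<integral>\<^sup>+\<omega>. ennreal (norm (exp (3 * real (size (N \<omega>))))) \<partial>M) < \<infinity>" by simp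
qed

lemma integrable_sq_loss: "integrable M (\<lambda>\<omega>. sq_loss n g f (N \<omega>))"
proof (rule Bochner_Integration.integrable_bound)
  define C where "C = 4 * nat (j0 n + 2) * (max_haar_height n / real n)\<^sup>2"
  have "C \<ge> 0" by (simp add: C_def)
  show "integrable M (\<lambda>\<omega>. C * exp (3 * real (size (N \<omega>))) + 2 * inner_L2 f f)"
    using integrable_exp_size by simp
  show "(\<lambda>\<omega>. sq_loss n g f (N \<omega>)) \<in> borel_measurable M" by (rule borel_measurable_sq_loss)
  show "AE \<omega> in M. norm (sq_loss n g f (N \<omega>)) \<le> norm (C * exp (3 * real (size (N \<omega>))) + 2 * inner_L2 f f)"
  proof (rule AE_I2)
    fix \<omega>
    have "sq_loss n g f (N \<omega>) \<le> C * real (size (N \<omega>)) ^ 3 + 2 * inner_L2 f f"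
      unfolding C_def by (rule sq_loss_le_cube[OF square_integrable_f])
    also have "\<dots> \<le> C * exp (3 * real (size (N \<omega>))) + 2 * inner_L2 f f"
      using \<open>C \<ge> 0\<close> real_cube_le_exp by (intro add_right_mono mult_left_mono) auto
    finally show "norm (sq_loss n g f (N \<omega>)) \<le> norm (C * exp (3 * real (size (N \<omega>))) + 2 * inner_L2 f f)"
      using sq_loss_nonneg[of n g f "N \<omega>"] by simp
  qed
qed

end

context haar_poisson_model
begin

lemma expectation_sq_loss_ge_finite:
  assumes F: "finite F" "F \<subseteq> Gamma_n n"
  shows "(\<Sum>l\<in>F. (beta f l)\<^sup>2 * prob {\<omega>\<in>space M. \<not> kept g n (N \<omega>) l})
    \<le> expectation (\<lambda>\<omega>. sq_loss n g f (N \<omega>))"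
proof -
  define D where "D l = {\<omega>\<in>space M. \<not> kept g n (N \<omega>) l}" for l
  have D: "D l \<in> sets M" for l unfolding D_def by measurable
  have int: "integrable M (\<lambda>\<omega>. (beta f l)\<^sup>2 * indicator (D l) \<omega>)" for l
    using D[of l] by (intro integrable_mult_right) (simp add: integrable_indicator_iff emeasure_eq_measure)
  have "(\<Sum>l\<in>F. (beta f l)\<^sup>2 * prob (D l)) = expectation (\<lambda>\<omega>. \<Sum>l\<in>F. (beta f l)\<^sup>2 * indicator (D l) \<omega>)"
    using D int by (simp add: Bochner_Integration.integral_sum)
  also have "\<dots> \<le> expectation (\<lambda>\<omega>. sq_loss n g f (N \<omega>))"
  proof (rule integral_mono[OF _ integrable_sq_loss])
    show "integrable M (\<lambda>\<omega>. \<Sum>l\<in>F. (beta f l)\<^sup>2 * indicator (D l) \<omega>)" using int by simp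
    fix \<omega> assume "\<omega> \<in> space M"
    then have "(\<Sum>l\<in>F. (beta f l)\<^sup>2 * indicator (D l) \<omega>)
        = (\<Sum>l\<in>F. (beta f l)\<^sup>2 * (if kept g n (N \<omega>) l then 0 else 1))"
      by (intro sum.cong) (auto simp: D_def)
    also have "\<dots> \<le> sq_loss n g f (N \<omega>)" by (rule sq_loss_ge_discarded[OF square_integrable_f F])
    finally show "(\<Sum>l\<in>F. (beta f l)\<^sup>2 * indicator (D l) \<omega>) \<le> sq_loss n g f (N \<omega>)" .
  qed
  finally show ?thesis by (simp add: D_def)
qed

lemma expectation_sq_loss_ge:
  assumes L: "L \<subseteq> Gamma_n n"
    and discard: "\<And>l. l \<in> L \<Longrightarrow> \<rho> \<le> prob {\<omega>\<in>space M. \<not> kept g n (N \<omega>) l}"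
  shows "(\<Sum>\<^sub>\<infinity>l\<in>L. (beta f l)\<^sup>2) * \<rho> \<le> expectation (\<lambda>\<omega>. sq_loss n g f (N \<omega>))"
proof -
  let ?E = "expectation (\<lambda>\<omega>. sq_loss n g f (N \<omega>))"
  have "?E \<ge> 0" by (intro integral_nonneg_AE) (simp add: sq_loss_nonneg)
  have "(\<Sum>\<^sub>\<infinity>l\<in>L. (beta f l)\<^sup>2) \<ge> 0" by (intro infsum_nonneg) simp
  show ?thesis
  proof (cases "\<rho> > 0 \<and> (\<lambda>l. (beta f l)\<^sup>2) summable_on L")
    case True
    have "(\<Sum>\<^sub>\<infinity>l\<in>L. (beta f l)\<^sup>2) \<le> ?E / \<rho>"
    proof (rule infsum_le_finite_sums[OF conjunct2[OF True]])
      fix F assume F: "finite F" "F \<subseteq> L"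
      have "(\<Sum>l\<in>F. (beta f l)\<^sup>2) * \<rho> \<le> (\<Sum>l\<in>F. (beta f l)\<^sup>2 * prob {\<omega>\<in>space M. \<not> kept g n (N \<omega>) l})"
        unfolding sum_distrib_right using F discard by (intro sum_mono mult_left_mono) auto
      also have "\<dots> \<le> ?E" using F L by (intro expectation_sq_loss_ge_finite) auto
      finally show "(\<Sum>l\<in>F. (beta f l)\<^sup>2) \<le> ?E / \<rho>" using True by (simp add: pos_le_divide_eq)
    qed
    then show ?thesis using True by (simp add: pos_le_divide_eq)
  next
    case False
    then show ?thesis
      using \<open>?E \<ge> 0\<close> \<open>(\<Sum>\<^sub>\<infinity>l\<in>L. (beta f l)\<^sup>2) \<ge> 0\<close>
      by (auto simp: infsum_not_exists mult_nonneg_nonpos intro: order.trans[of _ 0])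
  qed
qed

end

theorem lemma2:
  fixes f :: "real \<Rightarrow> real" and n :: nat and M :: "'a measure"
    and N :: "'a \<Rightarrow> real multiset" and \<gamma> \<gamma>min :: real and u :: "nat \<Rightarrow> real"
  assumes f_nonneg: "\<And>x. f x \<ge> 0"
    and f_L1: "integrable lborel f"
    and f_L2: "integrable lborel (\<lambda>x. (f x)\<^sup>2)"
    and n_ge: "n \<ge> 2"
    and PP: "poisson_process M N (density lborel (\<lambda>x. ennreal (real n * f x)))"
    and gam: "1 < \<gamma>min" "\<gamma>min < \<gamma>"
    and u_pos: "\<And>m. u m > 0"
  shows "prob_space.expectation M
           (\<lambda>\<omega>. LINT x|lborel. (f_tilde_H n \<gamma> (N \<omega>) x - f x)\<^sup>2)
         \<ge> (\<Sum>\<^sub>\<infinity>l \<in> {l \<in> Gamma_n n.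
               measure M {\<omega> \<in> space M. eta \<gamma> n (N \<omega>) l \<le> \<bar>beta f l\<bar> + eta \<gamma>min n (N \<omega>) l}
                 \<le> u n}. (beta f l)\<^sup>2)
           * (1 - (3 * real n powr (- \<gamma>min) + u n))"
proof -
  interpret haar_poisson_model f n M N
    using f_nonneg f_L1 f_L2 n_ge PP by unfold_locales auto
  have "1 - (3 * real n powr (- \<gamma>min) + u n) \<le> prob {\<omega>\<in>space M. \<not> kept \<gamma> n (N \<omega>) l}"
    if "prob {\<omega> \<in> space M. eta \<gamma> n (N \<omega>) l \<le> \<bar>beta f l\<bar> + eta \<gamma>min n (N \<omega>) l} \<le> u n" for l
  proof -
    have "{\<omega>\<in>space M. \<not> kept \<gamma> n (N \<omega>) l} = space M - {\<omega>\<in>space M. kept \<gamma> n (N \<omega>) l}"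
      by auto
    then have "prob {\<omega>\<in>space M. \<not> kept \<gamma> n (N \<omega>) l} = 1 - prob {\<omega>\<in>space M. kept \<gamma> n (N \<omega>) l}"
      using prob_compl[OF sets_kept] by simp
    then show ?thesis using prob_kept_le[of \<gamma>min \<gamma> l] gam that by simp
  qed
  then show ?thesis
    unfolding sq_loss_def[symmetric] by (intro expectation_sq_loss_ge) auto
qed

end
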